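(* Let $(X_t)_{t\ge 0}$ be a Markov process on $\mathbb{R}^d$ as described in the context, and assume that Hypotheses (LC), (H1) and (H2) hold. Then $X$ is exponentially ergodic in total variation: there exist a unique invariant probability measure $\mu$ for $(P_t)_{t\ge0}$ and positive constants $\theta, C$ such that for every $x\in\mathbb{R}^d$, $$\|P_t(x,\cdot)-\mu\|_{var}\le C e^{-\theta t}\,(1+V(x)),\qquad \forall t\ge 0,$$ where $V$ is the Lyapunov function from (LC).
   Context: Setting: $(\Omega,\mathcal{F},(\mathcal{F}_t)_{t\ge0},\mathbb{P})$ is a filtered probability space and $(X_t)_{t\ge0}$ is an adapted strong Markov process on $\mathbb{R}^d$ with càdlàg trajectories; $X_t(x)$ denotes the process started at $x$. $(P_t)_{t\ge0}$ is its Markov semigroup, $P_t(x,\cdot)$ its transition kernel, $P_tf(x)=\int f(y)P_t(x,dy)$, and $P_t^*$ is the dual semigroup acting on probability measures ($P_t^*\delta_x=P_t(x,\cdot)$). For probability measures $\mu,\nu$ on $\mathbb{R}^d$, $\Gamma(\mu,\nu)$ is the set of probability measures $\pi$ on $\mathbb{R}^d\times\mathbb{R}^d$ with marginals $\mu$ and $\nu$. For a signed measure $\mu$, $\|\mu\|_{var}=\sup\{|\mu(\Gamma)|:\Gamma\in\mathcal{B}(\mathbb{R}^d)\}$. $\|f\|_\infty$ is the (essential) sup norm of a bounded Borel function $f$. $\overline{B}_R=\{u\in\mathbb{R}^d:|u|\le R\}$. Hypothesis (LC): there are a measurable function $V:\mathbb{R}^d\to[1,\infty)$ with $\lim_{|x|\to\infty}V(x)=+\infty$,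 a time $t_*>0$ and constants $\alpha\in(0,1)$, $\beta\in[0,\infty)$ such that $P_{t_*}V(x)\le\alpha V(x)+\beta$ for all $x\in\mathbb{R}^d$. Hypothesis (H1) (weak irreducibility): for any $R,\delta>0$ there exist $R_0=R_0(R)>0$ (not depending on $\delta$) and $T_0=T_0(R,\delta)>0$ such that for all $t\ge T_0$ and all $x,y\in\overline{B}_R$, $$\sup_{\pi\in\Gamma(P_t^*\delta_x,P_t^*\delta_y)}\pi\{(x',y')\in\mathbb{R}^d\times\mathbb{R}^d:\ |x'-y'|\le\delta,\ x',y'\in\overline{B}_{R_0}\}>0.$$ Hypothesis (H2): for every $t>0$ and $x\in\mathbb{R}^d$, $\lim_{y\to x}\sup_{\|f\|_\infty\le1}[P_tf(x)-P_tf(y)]=0$, the supremum over bounded Borel $f$. *)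

theory Defs
  imports "HOL-Probability.Probability"
begin

text \<open>A Markov transition semigroup on the Euclidean space 'a (= R^d, d = DIM('a)).
  P t x is the transition kernel P_t(x, .), for times t >= 0.\<close>
definition markov_semigroup :: "(real \<Rightarrow> 'a::euclidean_space \<Rightarrow> 'a measure) \<Rightarrow> bool" where
  "markov_semigroup P \<longleftrightarrow>
     (\<forall>t\<ge>0. \<forall>x. prob_space (P t x) \<and> sets (P t x) = sets borel) \<and>
     (\<forall>t\<ge>0. P t \<in> borel \<rightarrow>\<^sub>M subprob_algebra borel) \<and>
     (\<forall>x. P 0 x = return borel x) \<and>
     (\<forall>s\<ge>0. \<forall>t\<ge>0. \<forall>x. P (s + t) x = P s x \<bind> P t)"

definition semigroup_apply :: "(real \<Rightarrow> 'a \<Rightarrow> 'a measure) \<Rightarrow> real \<Rightarrow> ('a \<Rightarrow> real) \<Rightarrow> 'a \<Rightarrow> real" where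
  "semigroup_apply P t f x = (\<integral>y. f y \<partial>(P t x))"

definition couplings :: "'a::euclidean_space measure \<Rightarrow> 'a measure \<Rightarrow> ('a \<times> 'a) measure set" where
  "couplings \<mu> \<nu> = {\<pi>. prob_space \<pi> \<and> sets \<pi> = sets (borel \<Otimes>\<^sub>M borel) \<and>
       distr \<pi> borel fst = \<mu> \<and> distr \<pi> borel snd = \<nu>}"

definition tv_norm :: "'a::euclidean_space measure \<Rightarrow> 'a measure \<Rightarrow> real" where
  "tv_norm \<mu> \<nu> = (SUP A \<in> sets borel. \<bar>measure \<mu> A - measure \<nu> A\<bar>)"

definition hyp_LC :: "(real \<Rightarrow> 'a::euclidean_space \<Rightarrow> 'a measure) \<Rightarrow> ('a \<Rightarrow> real) \<Rightarrow> bool" where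
  "hyp_LC P V \<longleftrightarrow> V \<in> borel_measurable borel \<and> (\<forall>x. V x \<ge> 1) \<and>
     filterlim V at_top at_infinity \<and>
     (\<exists>ts>0. \<exists>\<alpha>\<in>{0<..<1}. \<exists>\<beta>\<ge>0. \<forall>x.
        (\<integral>\<^sup>+ y. ennreal (V y) \<partial>(P ts x)) \<le> ennreal (\<alpha> * V x + \<beta>))"

definition hyp_H1 :: "(real \<Rightarrow> 'a::euclidean_space \<Rightarrow> 'a measure) \<Rightarrow> bool" where
  "hyp_H1 P \<longleftrightarrow> (\<forall>R>0. \<exists>R0>0. \<forall>\<delta>>0. \<exists>T0>0. \<forall>t\<ge>T0. \<forall>x\<in>cball 0 R. \<forall>y\<in>cball 0 R.
     (SUP \<pi> \<in> couplings (P t x) (P t y).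
        measure \<pi> {(x', y'). dist x' y' \<le> \<delta> \<and> x' \<in> cball 0 R0 \<and> y' \<in> cball 0 R0}) > 0)"

definition hyp_H2 :: "(real \<Rightarrow> 'a::euclidean_space \<Rightarrow> 'a measure) \<Rightarrow> bool" where
  "hyp_H2 P \<longleftrightarrow> (\<forall>t>0. \<forall>x.
     ((\<lambda>y. SUP f \<in> {f. f \<in> borel_measurable borel \<and> (\<forall>z. \<bar>f z\<bar> \<le> 1)}.
              semigroup_apply P t f x - semigroup_apply P t f y) \<longlongrightarrow> 0) (at x))"

definition invariant_prob :: "(real \<Rightarrow> 'a::euclidean_space \<Rightarrow> 'a measure) \<Rightarrow> 'a measure \<Rightarrow> bool" where
  "invariant_prob P \<mu> \<longleftrightarrow> prob_space \<mu> \<and> sets \<mu> = sets borel \<and> (\<forall>t\<ge>0. \<mu> \<bind> P t = \<mu>)"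

end

theory Submission
  imports Defs
begin

text \<open>
  Following Hairer and Mattingly, one measures test functions by the weighted seminorm
  \<open>sup |\<phi> z - \<phi> z'| / (2 + w V z + w V z')\<close>.  Hypothesis (H2) makes
  \<open>(x, y) \<mapsto> \<parallel>P\<^sub>u(x,\<cdot>) - P\<^sub>u(y,\<cdot>)\<parallel>\<close> continuous, so compactness and (H1) show that
  transition probabilities started in a ball overlap uniformly: their distance is at most
  \<open>1 - \<eta>\<close> at some time \<open>T\<close>.  Balls contain the sublevel sets of \<open>V\<close>, and together with
  the drift condition (LC) this makes \<open>P\<^sub>T\<close> a strict contraction for the weighted seminorm
  when \<open>w\<close> is small.  Iterating, the laws \<open>P\<^sub>n\<^sub>T(0,\<cdot>)\<close> converge geometrically in total
  variation; the limit is the invariant measure, and the contraction yields both the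
  exponential rate and uniqueness.
\<close>

lemma integrable_bounded_borel:
  fixes f :: "'a::euclidean_space \<Rightarrow> real"
  assumes "prob_space M" "sets M = sets borel" "f \<in> borel_measurable borel" "\<And>z. \<bar>f z\<bar> \<le> B"
  shows "integrable M f"
proof -
  interpret prob_space M by fact
  have "f \<in> borel_measurable M" using assms(3)
    by (subst measurable_cong_sets[where M'=borel and N'=borel]) (simp_all add: assms(2))
  then show ?thesis using assms(4) by (intro integrable_const_bound[where B=B]) auto
qed

lemma abs_integral_le_prob:
  fixes f :: "'a::euclidean_space \<Rightarrow> real"
  assumes "prob_space M" "f \<in> borel_measurable M" "\<And>z. \<bar>f z\<bar> \<le> B"
  shows "\<bar>\<integral>z. f z \<partial>M\<bar> \<le> B"
proof -
  interpret prob_space M by fact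
  have "integrable M f" using assms by (intro integrable_const_bound[where B=B]) auto
  then have "\<bar>\<integral>z. f z \<partial>M\<bar> \<le> (\<integral>z. B \<partial>M)"
    by (rule integral_abs_bound_integral) (use assms in auto)
  then show ?thesis by (simp add: prob_space)
qed

lemma integrable_nonneg_of_nn_integral_le:
  fixes V :: "'a::euclidean_space \<Rightarrow> real"
  assumes M: "sets M = sets borel" and Vm: "V \<in> borel_measurable borel" and V0: "\<And>x. 0 \<le> V x"
    and HB: "(\<integral>\<^sup>+ y. ennreal (V y) \<partial>M) \<le> ennreal B" and B: "0 \<le> B"
  shows "integrable M V" "(\<integral>y. V y \<partial>M) \<le> B"
proof -
  have Vm': "V \<in> borel_measurable M"
    using Vm by (subst measurable_cong_sets[where M'=borel and N'=borel]) (simp_all add: M)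
  have fin: "(\<integral>\<^sup>+ y. ennreal (V y) \<partial>M) < \<infinity>" using HB by (simp add: le_less_trans)
  show i: "integrable M V" by (rule integrableI_nonneg[OF Vm']) (use V0 fin in auto)
  have "ennreal (\<integral>y. V y \<partial>M) = (\<integral>\<^sup>+ y. ennreal (V y) \<partial>M)"
    by (rule nn_integral_eq_integral[OF i, symmetric]) (use V0 in auto)
  also have "\<dots> \<le> ennreal B" by (rule HB)
  finally show "(\<integral>y. V y \<partial>M) \<le> B" using B ennreal_le_iff by blast
qed

lemma prob_space_eq_borelI:
  fixes A B :: "'a::euclidean_space measure"
  assumes "prob_space A" "sets A = sets borel" "prob_space B" "sets B = sets borel"
    and "\<And>S. S \<in> sets borel \<Longrightarrow> measure A S = measure B S"
  shows "A = B"
proof (rule measure_eqI)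
  show "sets A = sets B" using assms by simp
  fix S assume S: "S \<in> sets A"
  interpret a: prob_space A by fact
  interpret b: prob_space B by fact
  have "S \<in> sets B" "S \<in> sets borel" using S assms by auto
  then show "emeasure A S = emeasure B S"
    using assms(5) by (simp add: a.emeasure_eq_measure b.emeasure_eq_measure)
qed

section \<open>Total variation distance\<close>

lemma count_le_real_bounds:
  fixes x :: real and n :: nat
  assumes "0 \<le> x" "x \<le> real n"
  shows "x - 1 \<le> (\<Sum>j\<in>{1..n}. if real j \<le> x then 1 else 0::real)"
    and "(\<Sum>j\<in>{1..n}. if real j \<le> x then 1 else 0::real) \<le> x"
proof -
  have iff: "real j \<le> x \<longleftrightarrow> j \<le> nat \<lfloor>x\<rfloor>" for j :: nat
  proof -
    have "real j \<le> x \<longleftrightarrow> int j \<le> \<lfloor>x\<rfloor>" by (simp add: le_floor_iff)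
    also have "\<dots> \<longleftrightarrow> j \<le> nat \<lfloor>x\<rfloor>" using assms by (simp add: le_nat_iff)
    finally show ?thesis .
  qed
  have fl: "nat \<lfloor>x\<rfloor> \<le> n" using assms
    by (metis floor_mono floor_of_nat nat_int nat_mono)
  have s: "(\<Sum>j\<in>{1..n}. if real j \<le> x then 1 else 0::real) = real (nat \<lfloor>x\<rfloor>)"
  proof -
    have "(\<Sum>j\<in>{1..n}. if real j \<le> x then 1 else 0::real) = (\<Sum>j\<in>{1..n}. of_bool (real j \<le> x))"
      by (intro sum.cong) auto
    also have "\<dots> = of_nat (card ({1..n} \<inter> {j. real j \<le> x}))" by (rule sum_of_bool_eq) simp_all
    also have "{1..n} \<inter> {j. real j \<le> x} = {1..nat \<lfloor>x\<rfloor>}" using fl by (auto simp: iff)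
    finally show ?thesis by simp
  qed
  have "real (nat \<lfloor>x\<rfloor>) = of_int \<lfloor>x\<rfloor>" using assms by simp
  then show "x - 1 \<le> (\<Sum>j\<in>{1..n}. if real j \<le> x then 1 else 0::real)"
    "(\<Sum>j\<in>{1..n}. if real j \<le> x then 1 else 0::real) \<le> x"
    unfolding s by linarith+
qed

lemma level_set_average_bounds:
  fixes y :: real and n :: nat
  assumes "0 \<le> y" "y \<le> 1" "0 < real n"
  defines "S \<equiv> (\<Sum>j\<in>{1..n}. if real j \<le> real n * y then 1 else 0::real)"
  shows "y - 1 / real n \<le> S / real n" and "S / real n \<le> y"
proof -
  have "0 \<le> real n * y" "real n * y \<le> real n" using assms by simp_all
  note bounds = count_le_real_bounds[OF this, folded S_def]
  show "S / real n \<le> y" using bounds(2) assms(3) by (simp add: divide_le_eq mult.commute)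
  have "(real n * y - 1) / real n \<le> S / real n"
    using bounds(1) assms(3) by (intro divide_right_mono) auto
  then show "y - 1 / real n \<le> S / real n"
    using assms(3) by (simp add: diff_divide_distrib)
qed

text \<open>A \<open>[0,1]\<close>-valued \<open>h\<close> is approximated from below within \<open>1/n\<close> by the average of
  the indicators of its level sets \<open>{j \<le> n h}\<close>, \<open>j = 1..n\<close>.\<close>

lemma integral_diff_le_of_measure_diff_le:
  fixes A B :: "'a::euclidean_space measure"
  assumes A: "prob_space A" "sets A = sets borel" and B: "prob_space B" "sets B = sets borel"
    and close: "\<And>S. S \<in> sets borel \<Longrightarrow> measure A S - measure B S \<le> \<epsilon>"
    and hm: "h \<in> borel_measurable borel" and h0: "\<And>z. 0 \<le> h z" and h1: "\<And>z. h z \<le> 1"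
  shows "(\<integral>z. h z \<partial>A) - (\<integral>z. h z \<partial>B) \<le> \<epsilon>"
proof (rule field_le_epsilon)
  fix e :: real assume e: "0 < e"
  obtain n :: nat where n: "1 / e < real n" using reals_Archimedean2 by blast
  have npos: "0 < real n" using n e by (smt (verit) divide_pos_pos)
  have ne: "1 / real n < e" using n e npos by (simp add: field_simps)
  define L where "L j = {z. real j \<le> real n * h z}" for j :: nat
  have Lm: "L j \<in> sets borel" for j unfolding L_def using hm by measurable
  define s where "s z = (\<Sum>j\<in>{1..n}. indicator (L j) z) / real n" for z
  have sm: "s \<in> borel_measurable borel" unfolding s_def using Lm by measurable
  have ind: "(\<Sum>j\<in>{1..n}. indicator (L j) z) =
      (\<Sum>j\<in>{1..n}. if real j \<le> real n * h z then 1 else 0::real)" for z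
    by (intro sum.cong) (auto simp: L_def indicator_def)
  have sz: "h z - 1 / real n \<le> s z \<and> s z \<le> h z" for z
    using level_set_average_bounds[OF h0[of z] h1[of z] npos] unfolding s_def ind by simp
  have intS: "(\<integral>z. s z \<partial>M) = (\<Sum>j\<in>{1..n}. measure M (L j)) / real n"
    if M: "prob_space M" "sets M = sets borel" for M :: "'a measure"
  proof -
    interpret prob_space M by (rule M)
    have LM: "L j \<in> sets M" for j using Lm M by simp
    have "(\<integral>z. s z \<partial>M) = (\<integral>z. (\<Sum>j\<in>{1..n}. indicator (L j) z) \<partial>M) / real n"
      unfolding s_def by simp
    also have "(\<integral>z. (\<Sum>j\<in>{1..n}. indicator (L j) z :: real) \<partial>M) =
        (\<Sum>j\<in>{1..n}. (\<integral>z. indicator (L j) z \<partial>M))"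
      by (rule Bochner_Integration.integral_sum)
        (auto simp: LM less_top[symmetric] emeasure_finite intro!: integrable_real_indicator)
    also have "\<dots> = (\<Sum>j\<in>{1..n}. measure M (L j))"
      using LM by (intro sum.cong) auto
    finally show ?thesis .
  qed
  have s_abs: "\<bar>s z\<bar> \<le> 1" for z
  proof -
    have "0 \<le> s z" unfolding s_def using npos by (intro divide_nonneg_pos sum_nonneg) auto
    then show ?thesis using sz[of z] h1[of z] by linarith
  qed
  have h_abs: "\<bar>h z\<bar> \<le> 1" for z using h0[of z] h1[of z] by simp
  have hA: "(\<integral>z. h z \<partial>A) \<le> (\<integral>z. s z \<partial>A) + 1 / real n"
  proof -
    interpret prob_space A by (rule A(1))
    have "(\<integral>z. h z \<partial>A) \<le> (\<integral>z. s z + 1 / real n \<partial>A)"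
      using integrable_bounded_borel[OF A hm h_abs] integrable_bounded_borel[OF A sm s_abs] sz
      by (intro integral_mono) (auto simp: algebra_simps)
    also have "\<dots> = (\<integral>z. s z \<partial>A) + 1 / real n"
      using integrable_bounded_borel[OF A sm s_abs] by (simp add: prob_space)
    finally show ?thesis .
  qed
  have hB: "(\<integral>z. s z \<partial>B) \<le> (\<integral>z. h z \<partial>B)"
    using integrable_bounded_borel[OF B hm h_abs] integrable_bounded_borel[OF B sm s_abs] sz
    by (intro integral_mono) auto
  have "(\<integral>z. s z \<partial>A) - (\<integral>z. s z \<partial>B) = (\<Sum>j\<in>{1..n}. measure A (L j) - measure B (L j)) / real n"
    unfolding intS[OF A] intS[OF B] by (simp add: sum_subtractf diff_divide_distrib)
  also have "\<dots> \<le> (real n * \<epsilon>) / real n"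
  proof -
    have "(\<Sum>j\<in>{1..n}. measure A (L j) - measure B (L j)) \<le> of_nat (card {1..n}) * \<epsilon>"
      by (rule sum_bounded_above) (use close Lm in auto)
    then show ?thesis using npos by (intro divide_right_mono) auto
  qed
  also have "\<dots> = \<epsilon>" using npos by simp
  finally have "(\<integral>z. s z \<partial>A) - (\<integral>z. s z \<partial>B) \<le> \<epsilon>" .
  then show "(\<integral>z. h z \<partial>A) - (\<integral>z. h z \<partial>B) \<le> \<epsilon> + e" using hA hB ne by linarith
qed

lemma tv_norm_bdd_above:
  fixes A B :: "'a::euclidean_space measure"
  assumes "prob_space A" "prob_space B"
  shows "bdd_above ((\<lambda>S. \<bar>measure A S - measure B S\<bar>) ` sets borel)"
proof -
  interpret a: prob_space A by fact
  interpret b: prob_space B by fact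
  have "\<bar>measure A S - measure B S\<bar> \<le> 1" for S
    using a.prob_le_1[of S] b.prob_le_1[of S] measure_nonneg[of A S] measure_nonneg[of B S]
    by linarith
  then show ?thesis by (intro bdd_aboveI[where M=1]) auto
qed

lemma abs_measure_diff_le_tv_norm:
  fixes A B :: "'a::euclidean_space measure"
  assumes "prob_space A" "prob_space B" "S \<in> sets borel"
  shows "\<bar>measure A S - measure B S\<bar> \<le> tv_norm A B"
  unfolding tv_norm_def using tv_norm_bdd_above[OF assms(1,2)] assms(3) by (rule cSUP_upper2) simp

lemma tv_norm_le:
  fixes A B :: "'a::euclidean_space measure"
  assumes "\<And>S. S \<in> sets borel \<Longrightarrow> \<bar>measure A S - measure B S\<bar> \<le> c"
  shows "tv_norm A B \<le> c"
  unfolding tv_norm_def using assms by (intro cSUP_least) auto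

lemma tv_norm_nonneg:
  fixes A B :: "'a::euclidean_space measure"
  assumes "prob_space A" "prob_space B"
  shows "0 \<le> tv_norm A B"
  using abs_measure_diff_le_tv_norm[OF assms, of "{}"] by simp

lemma tv_norm_commute: "tv_norm A B = tv_norm B A"
  unfolding tv_norm_def by (simp add: abs_minus_commute)

lemma tv_norm_self [simp]: "tv_norm A A = 0"
proof -
  have "sets (borel::'a measure) \<noteq> {}" using sets.empty_sets by blast
  then show ?thesis unfolding tv_norm_def using cSUP_const[of _ "0::real"] by simp
qed

lemma tv_norm_le_1:
  fixes A B :: "'a::euclidean_space measure"
  assumes "prob_space A" "prob_space B"
  shows "tv_norm A B \<le> 1"
proof (rule tv_norm_le)
  interpret a: prob_space A by fact
  interpret b: prob_space B by fact
  fix S show "\<bar>measure A S - measure B S\<bar> \<le> 1"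
    using a.prob_le_1[of S] b.prob_le_1[of S] measure_nonneg[of A S] measure_nonneg[of B S]
    by linarith
qed

lemma tv_norm_triangle:
  fixes A B C :: "'a::euclidean_space measure"
  assumes "prob_space A" "prob_space B" "prob_space C"
  shows "tv_norm A C \<le> tv_norm A B + tv_norm B C"
proof (rule tv_norm_le)
  fix S :: "'a set" assume S: "S \<in> sets borel"
  have "\<bar>measure A S - measure C S\<bar> \<le> \<bar>measure A S - measure B S\<bar> + \<bar>measure B S - measure C S\<bar>"
    by simp
  also have "\<dots> \<le> tv_norm A B + tv_norm B C"
    using abs_measure_diff_le_tv_norm[OF assms(1,2) S] abs_measure_diff_le_tv_norm[OF assms(2,3) S]
    by simp
  finally show "\<bar>measure A S - measure C S\<bar> \<le> tv_norm A B + tv_norm B C" .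
qed

lemma abs_tv_norm_diff_le:
  fixes A A' B B' :: "'a::euclidean_space measure"
  assumes "prob_space A" "prob_space A'" "prob_space B" "prob_space B'"
  shows "\<bar>tv_norm A B - tv_norm A' B'\<bar> \<le> tv_norm A A' + tv_norm B B'"
proof -
  have "tv_norm A B \<le> tv_norm A A' + tv_norm A' B' + tv_norm B' B"
    using tv_norm_triangle[of A A' B] tv_norm_triangle[of A' B' B] assms by simp
  moreover have "tv_norm A' B' \<le> tv_norm A' A + tv_norm A B + tv_norm B B'"
    using tv_norm_triangle[of A' A B'] tv_norm_triangle[of A B B'] assms by simp
  ultimately show ?thesis by (simp add: abs_le_iff tv_norm_commute)
qed

lemma abs_integral_diff_le_tv_norm:
  fixes A B :: "'a::euclidean_space measure"
  assumes A: "prob_space A" "sets A = sets borel" and B: "prob_space B" "sets B = sets borel"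
    and hm: "h \<in> borel_measurable borel" and h0: "\<And>z. 0 \<le> h z" and h1: "\<And>z. h z \<le> 1"
  shows "\<bar>(\<integral>z. h z \<partial>A) - (\<integral>z. h z \<partial>B)\<bar> \<le> tv_norm A B"
proof -
  have "(\<integral>z. h z \<partial>A) - (\<integral>z. h z \<partial>B) \<le> tv_norm A B"
    by (rule integral_diff_le_of_measure_diff_le[OF A B _ hm h0 h1])
       (use abs_measure_diff_le_tv_norm[OF A(1) B(1)] in \<open>force simp: abs_le_iff\<close>)
  moreover have "(\<integral>z. h z \<partial>B) - (\<integral>z. h z \<partial>A) \<le> tv_norm A B"
    by (rule integral_diff_le_of_measure_diff_le[OF B A _ hm h0 h1])
       (use abs_measure_diff_le_tv_norm[OF A(1) B(1)] in \<open>force simp: abs_le_iff\<close>)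
  ultimately show ?thesis by linarith
qed

lemma abs_integral_diff_le_tv_norm_bounded:
  fixes A B :: "'a::euclidean_space measure"
  assumes A: "prob_space A" "sets A = sets borel" and B: "prob_space B" "sets B = sets borel"
    and hm: "h \<in> borel_measurable borel" and hb: "\<And>z. \<bar>h z\<bar> \<le> M"
  shows "\<bar>(\<integral>z. h z \<partial>A) - (\<integral>z. h z \<partial>B)\<bar> \<le> 2 * M * tv_norm A B"
proof (cases "M = 0")
  case True
  then have "h = (\<lambda>z. 0)" using hb by (intro ext) (metis abs_le_zero_iff)
  then show ?thesis using True by simp
next
  case False
  then have Mpos: "0 < M" using hb[of undefined] by linarith
  define g where "g z = (h z + M) / (2 * M)" for z
  have gm: "g \<in> borel_measurable borel" unfolding g_def using hm by measurable
  have g01: "0 \<le> g z" "g z \<le> 1" for z unfolding g_def using hb[of z] Mpos by (auto simp: abs_le_iff)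
  have eqN: "(\<integral>z. h z \<partial>N) = 2 * M * (\<integral>z. g z \<partial>N) - M"
    if "prob_space N" "sets N = sets borel" for N :: "'a measure"
  proof -
    interpret prob_space N by fact
    have "h z = 2 * M * g z - M" for z unfolding g_def using Mpos by (simp add: field_simps)
    then have "(\<integral>z. h z \<partial>N) = (\<integral>z. 2 * M * g z - M \<partial>N)" by simp
    also have "\<dots> = 2 * M * (\<integral>z. g z \<partial>N) - M"
      using integrable_bounded_borel[OF that gm, of 1] g01 by (simp add: prob_space)
    finally show ?thesis .
  qed
  have "\<bar>(\<integral>z. h z \<partial>A) - (\<integral>z. h z \<partial>B)\<bar> = 2 * M * \<bar>(\<integral>z. g z \<partial>A) - (\<integral>z. g z \<partial>B)\<bar>"
    unfolding eqN[OF A] eqN[OF B] using Mpos by (simp add: abs_mult right_diff_distrib[symmetric])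
  also have "\<dots> \<le> 2 * M * tv_norm A B"
    using abs_integral_diff_le_tv_norm[OF A B gm g01] Mpos by simp
  finally show ?thesis .
qed

lemma pair_measure_in_couplings:
  fixes A B :: "'a::euclidean_space measure"
  assumes A: "prob_space A" "sets A = sets borel" and B: "prob_space B" "sets B = sets borel"
  shows "A \<Otimes>\<^sub>M B \<in> couplings A B"
proof -
  interpret a: prob_space A by fact
  interpret b: prob_space B by fact
  have sp: "sets (A \<Otimes>\<^sub>M B) = sets (borel \<Otimes>\<^sub>M borel)"
    by (rule sets_pair_measure_cong) (simp_all add: A B)
  have spA: "space A = UNIV" using sets_eq_imp_space_eq[OF A(2)] by simp
  have spB: "space B = UNIV" using sets_eq_imp_space_eq[OF B(2)] by simp
  have spc: "space (A \<Otimes>\<^sub>M B) = UNIV" by (simp add: space_pair_measure spA spB)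
  have f: "distr (A \<Otimes>\<^sub>M B) borel fst = A"
  proof -
    have "distr (A \<Otimes>\<^sub>M B) borel fst = distr (A \<Otimes>\<^sub>M B) A fst"
      by (rule distr_cong) (simp_all add: A)
    also have "\<dots> = A" by (rule b.distr_pair_fst)
    finally show ?thesis .
  qed
  have s: "distr (A \<Otimes>\<^sub>M B) borel snd = B"
  proof (rule measure_eqI)
    show "sets (distr (A \<Otimes>\<^sub>M B) borel snd) = sets B" using B by simp
    fix S assume S: "S \<in> sets (distr (A \<Otimes>\<^sub>M B) borel snd)"
    then have Sb: "S \<in> sets B" using B by simp
    have snd_m: "snd \<in> measurable (A \<Otimes>\<^sub>M B) borel"
      using measurable_snd[of A B] measurable_cong_sets[OF refl B(2), of "A \<Otimes>\<^sub>M B"] by simp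
    have "emeasure (distr (A \<Otimes>\<^sub>M B) borel snd) S = emeasure (A \<Otimes>\<^sub>M B) (snd -` S \<inter> space (A \<Otimes>\<^sub>M B))"
      using S by (intro emeasure_distr[OF snd_m]) simp
    also have "snd -` S \<inter> space (A \<Otimes>\<^sub>M B) = space A \<times> S"
      unfolding spc spA by auto
    also have "emeasure (A \<Otimes>\<^sub>M B) (space A \<times> S) = emeasure A (space A) * emeasure B S"
      by (rule b.emeasure_pair_measure_Times) (simp_all add: Sb)
    also have "\<dots> = emeasure B S" by (simp add: a.emeasure_space_1)
    finally show "emeasure (distr (A \<Otimes>\<^sub>M B) borel snd) S = emeasure B S" .
  qed
  show ?thesis unfolding couplings_def
    using prob_space_pair[OF A(1) B(1)] sp f s by blast
qed

lemma abs_integral_diff_le_coupling: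
  fixes \<mu> \<nu> :: "'a::euclidean_space measure" and g :: "'a \<Rightarrow> real"
  assumes \<pi>C: "\<pi> \<in> couplings \<mu> \<nu>" and \<Gamma>: "\<Gamma> \<in> sets borel"
    and gm: "g \<in> borel_measurable borel" and g01: "\<And>z. 0 \<le> g z" "\<And>z. g z \<le> 1"
    and close: "\<And>x y. (x, y) \<in> \<Gamma> \<Longrightarrow> \<bar>g x - g y\<bar> \<le> \<epsilon>"
  shows "\<bar>(\<integral>z. g z \<partial>\<mu>) - (\<integral>z. g z \<partial>\<nu>)\<bar> \<le> 1 - (1 - \<epsilon>) * measure \<pi> \<Gamma>"
proof -
  have \<pi>: "prob_space \<pi>" "sets \<pi> = sets (borel \<Otimes>\<^sub>M borel)" "distr \<pi> borel fst = \<mu>"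
    "distr \<pi> borel snd = \<nu>"
    using \<pi>C unfolding couplings_def by auto
  interpret pi: prob_space \<pi> by (rule \<pi>(1))
  have "sets \<pi> = sets (borel :: ('a \<times> 'a) measure)"
    by (rule trans[OF \<pi>(2) arg_cong[OF borel_prod, of sets]])
  then have \<Gamma>s: "\<Gamma> \<in> sets \<pi>" using \<Gamma> by simp
  have fst_m: "fst \<in> measurable \<pi> borel"
    using measurable_fst[of "borel::'a measure" "borel::'a measure"]
    by (subst measurable_cong_sets[OF \<pi>(2) refl])
  have snd_m: "snd \<in> measurable \<pi> borel"
    using measurable_snd[of "borel::'a measure" "borel::'a measure"]
    by (subst measurable_cong_sets[OF \<pi>(2) refl])
  have igf: "integrable \<pi> (\<lambda>p. g (fst p))"
    by (rule pi.integrable_const_bound[where B=1]) (use measurable_compose[OF fst_m gm] g01 in auto)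
  have igs: "integrable \<pi> (\<lambda>p. g (snd p))"
    by (rule pi.integrable_const_bound[where B=1]) (use measurable_compose[OF snd_m gm] g01 in auto)
  define h where "h p = (1 - (1 - \<epsilon>) * indicator \<Gamma> p :: real)" for p :: "'a \<times> 'a"
  have i\<Gamma>: "integrable \<pi> (\<lambda>p. (1 - \<epsilon>) * indicator \<Gamma> p :: real)" using \<Gamma>s
    by (intro integrable_mult_right integrable_real_indicator)
      (auto simp: pi.emeasure_finite less_top[symmetric])
  have ih: "integrable \<pi> h" unfolding h_def using i\<Gamma> by simp
  have inth: "(\<integral>p. h p \<partial>\<pi>) = 1 - (1 - \<epsilon>) * measure \<pi> \<Gamma>"
    unfolding h_def using i\<Gamma> \<Gamma>s by (simp add: pi.prob_space sets.Int_space_eq2)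
  have pw: "\<bar>g (fst p) - g (snd p)\<bar> \<le> h p" for p
    using close[of "fst p" "snd p"] g01[of "fst p"] g01[of "snd p"]
    by (cases "p \<in> \<Gamma>") (auto simp: h_def abs_le_iff)
  have "(\<integral>z. g z \<partial>\<mu>) - (\<integral>z. g z \<partial>\<nu>) = (\<integral>p. g (fst p) - g (snd p) \<partial>\<pi>)"
    unfolding \<pi>(3,4)[symmetric] integral_distr[OF fst_m gm] integral_distr[OF snd_m gm]
    using igf igs by simp
  also have "\<bar>\<dots>\<bar> \<le> (\<integral>p. h p \<partial>\<pi>)"
    by (rule integral_abs_bound_integral) (use igf igs ih pw in auto)
  finally show ?thesis unfolding inth .
qed

section \<open>Limits of probability measures\<close>

lemma Cauchy_rate_limit:
  fixes a B :: "nat \<Rightarrow> real"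
  assumes bnd: "\<And>n m. \<bar>a (m + n) - a n\<bar> \<le> B n" and B: "B \<longlonglongrightarrow> 0"
  shows "\<exists>L. a \<longlonglongrightarrow> L \<and> (\<forall>n. \<bar>L - a n\<bar> \<le> B n)"
proof -
  have "Cauchy a"
  proof (rule CauchyI)
    fix e :: real assume e: "0 < e"
    have "\<forall>\<^sub>F n in sequentially. dist (B n) 0 < e / 2"
      by (rule B[unfolded tendsto_iff, rule_format]) (use e in simp)
    then obtain N where N: "\<And>n. n \<ge> N \<Longrightarrow> \<bar>B n\<bar> < e / 2"
      unfolding eventually_sequentially by auto
    show "\<exists>M. \<forall>m\<ge>M. \<forall>n\<ge>M. norm (a m - a n) < e"
    proof (intro exI allI impI)
      fix m n assume mn: "m \<ge> N" "n \<ge> N"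
      have 1: "\<bar>a m - a N\<bar> \<le> B N" using bnd[of "m - N" N] mn by simp
      have 2: "\<bar>a n - a N\<bar> \<le> B N" using bnd[of "n - N" N] mn by simp
      show "norm (a m - a n) < e" using 1 2 N[of N] by simp
    qed
  qed
  then obtain L where L: "a \<longlonglongrightarrow> L" using Cauchy_convergent_iff convergent_def by blast
  have "\<bar>L - a n\<bar> \<le> B n" for n
  proof -
    have "(\<lambda>m. a (m + n)) \<longlonglongrightarrow> L" using LIMSEQ_ignore_initial_segment[OF L, of n] by simp
    then have "(\<lambda>m. \<bar>a (m + n) - a n\<bar>) \<longlonglongrightarrow> \<bar>L - a n\<bar>" by (intro tendsto_intros)
    then show ?thesis
      by (rule tendsto_upperbound) (use bnd in auto)
  qed
  with L show ?thesis by blast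
qed

lemma measure_tendsto_of_uniform_limit:
  fixes \<nu> :: "nat \<Rightarrow> 'a::euclidean_space measure" and ell :: "'a set \<Rightarrow> real"
  assumes unif: "\<And>n A. A \<in> sets borel \<Longrightarrow> \<bar>ell A - measure (\<nu> n) A\<bar> \<le> B n" and B: "B \<longlonglongrightarrow> 0"
    and A: "A \<in> sets borel"
  shows "(\<lambda>n. measure (\<nu> n) A) \<longlonglongrightarrow> ell A"
proof -
  have "(\<lambda>n. measure (\<nu> n) A - ell A) \<longlonglongrightarrow> 0"
    by (rule Lim_null_comparison[OF _ B]) (use unif[OF A] in \<open>auto simp: abs_minus_commute\<close>)
  then show ?thesis by (rule LIM_zero_cancel)
qed

lemma sums_of_uniform_limit_measure:
  fixes \<nu> :: "nat \<Rightarrow> 'a::euclidean_space measure" and ell :: "'a set \<Rightarrow> real"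
  assumes prob: "\<And>n. prob_space (\<nu> n)" and sets: "\<And>n. sets (\<nu> n) = sets borel"
    and unif: "\<And>n A. A \<in> sets borel \<Longrightarrow> \<bar>ell A - measure (\<nu> n) A\<bar> \<le> B n" and B: "B \<longlonglongrightarrow> 0"
    and F: "range F \<subseteq> sets borel" "disjoint_family F"
  shows "(\<lambda>i. ell (F i)) sums ell (\<Union>i. F i)"
proof -
  have lim: "(\<lambda>n. measure (\<nu> n) A) \<longlonglongrightarrow> ell A" if "A \<in> sets borel" for A
    by (rule measure_tendsto_of_uniform_limit[where B=B]) (use unif B that in auto)
  have finadd: "ell (\<Union>i<N. F i) = (\<Sum>i<N. ell (F i))" for N
  proof -
    have UNN: "(\<Union>i<N. F i) \<in> sets borel" using F by auto
    have "(\<lambda>n. measure (\<nu> n) (\<Union>i<N. F i)) \<longlonglongrightarrow> ell (\<Union>i<N. F i)" using lim[OF UNN] .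
    moreover have "measure (\<nu> n) (\<Union>i<N. F i) = (\<Sum>i<N. measure (\<nu> n) (F i))" for n
    proof -
      interpret prob_space "\<nu> n" by (rule prob)
      show ?thesis
        by (rule finite_measure_finite_Union)
           (use F sets[of n] in \<open>auto simp: disjoint_family_on_def\<close>)
    qed
    moreover have "(\<lambda>n. \<Sum>i<N. measure (\<nu> n) (F i)) \<longlonglongrightarrow> (\<Sum>i<N. ell (F i))"
      using F by (intro tendsto_sum lim) auto
    ultimately show ?thesis using LIMSEQ_unique by auto
  qed
  define U where "U = (\<Union>i. F i)"
  define UNN where "UNN N = (\<Union>i<N. F i)" for N
  have Um: "U \<in> sets borel" using F unfolding U_def by auto
  have UNm: "UNN N \<in> sets borel" for N using F unfolding UNN_def by auto
  have "(\<lambda>N. ell (UNN N)) \<longlonglongrightarrow> ell U"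
  proof (rule LIMSEQ_I)
    fix e :: real assume e: "0 < e"
    have "\<forall>\<^sub>F n in sequentially. dist (B n) 0 < e / 4"
      by (rule B[unfolded tendsto_iff, rule_format]) (use e in simp)
    then obtain n where n: "\<bar>B n\<bar> < e / 4" unfolding eventually_sequentially by auto
    interpret prob_space "\<nu> n" by (rule prob)
    have inc: "incseq UNN" unfolding UNN_def incseq_def by (auto intro: less_le_trans)
    have UU: "(\<Union>N. UNN N) = U" unfolding UNN_def U_def by auto
    have "(\<lambda>N. measure (\<nu> n) (UNN N)) \<longlonglongrightarrow> measure (\<nu> n) (\<Union>N. UNN N)"
      by (rule finite_Lim_measure_incseq) (use UNm sets[of n] inc in auto)
    then have "(\<lambda>N. measure (\<nu> n) (UNN N)) \<longlonglongrightarrow> measure (\<nu> n) U" using UU by simp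
    then obtain N0 where N0: "\<And>N. N \<ge> N0 \<Longrightarrow> norm (measure (\<nu> n) (UNN N) - measure (\<nu> n) U) < e / 2"
      using e LIMSEQ_D[of _ "measure (\<nu> n) U" "e/2"] by (metis half_gt_zero)
    show "\<exists>no. \<forall>N\<ge>no. norm (ell (UNN N) - ell U) < e"
    proof (intro exI allI impI)
      fix N assume N: "N \<ge> N0"
      have 1: "\<bar>ell U - measure (\<nu> n) U\<bar> \<le> B n" by (rule unif[OF Um])
      have 2: "\<bar>ell (UNN N) - measure (\<nu> n) (UNN N)\<bar> \<le> B n" by (rule unif[OF UNm])
      show "norm (ell (UNN N) - ell U) < e"
        using 1 2 N0[OF N] n unfolding real_norm_def
        by (simp only: abs_le_iff abs_less_iff) linarith
    qed
  qed
  then show ?thesis unfolding sums_def UNN_def U_def using finadd by simp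
qed

lemma prob_measure_of_uniform_limit:
  fixes \<nu> :: "nat \<Rightarrow> 'a::euclidean_space measure" and ell :: "'a set \<Rightarrow> real"
  assumes prob: "\<And>n. prob_space (\<nu> n)" and sets: "\<And>n. sets (\<nu> n) = sets borel"
    and unif: "\<And>n A. A \<in> sets borel \<Longrightarrow> \<bar>ell A - measure (\<nu> n) A\<bar> \<le> B n" and B: "B \<longlonglongrightarrow> 0"
  shows "\<exists>\<mu>. prob_space \<mu> \<and> sets \<mu> = sets borel \<and> (\<forall>A\<in>sets borel. measure \<mu> A = ell A)"
proof -
  have lim: "(\<lambda>n. measure (\<nu> n) A) \<longlonglongrightarrow> ell A" if "A \<in> sets borel" for A
    by (rule measure_tendsto_of_uniform_limit[where B=B]) (use unif B that in auto)
  have nonneg: "0 \<le> ell A" if A: "A \<in> sets borel" for A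
    by (rule tendsto_lowerbound[OF lim[OF A]]) auto
  have spaceU: "space (\<nu> n) = UNIV" for n by (metis sets sets_eq_imp_space_eq space_borel)
  have one: "ell UNIV = 1"
  proof -
    have "(\<lambda>n. measure (\<nu> n) UNIV) \<longlonglongrightarrow> ell UNIV" using lim by simp
    moreover have "measure (\<nu> n) UNIV = 1" for n
      using prob_space.prob_space[OF prob[of n]] spaceU[of n] by simp
    ultimately have "(\<lambda>n::nat. 1::real) \<longlonglongrightarrow> ell UNIV" by simp
    from LIMSEQ_unique[OF this tendsto_const] show ?thesis by simp
  qed
  have empty: "ell {} = 0"
  proof -
    have "(\<lambda>n. measure (\<nu> n) {}) \<longlonglongrightarrow> ell {}" using lim[of "{}"] by simp
    then have "(\<lambda>n::nat. 0::real) \<longlonglongrightarrow> ell {}" by simp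
    from LIMSEQ_unique[OF this tendsto_const] show ?thesis by simp
  qed
  define \<mu> where "\<mu> = measure_of UNIV (sets borel) (\<lambda>A. ennreal (ell A))"
  have sa: "sigma_algebra UNIV (sets (borel::'a measure))"
    using sets.sigma_algebra_axioms[of "borel::'a measure"] by simp
  have pos: "positive (sets borel) (\<lambda>A. ennreal (ell A))"
    unfolding positive_def using empty by simp
  have ca: "countably_additive (sets borel) (\<lambda>A. ennreal (ell A))"
    unfolding countably_additive_def
  proof (intro allI impI)
    fix F :: "nat \<Rightarrow> 'a set" assume F: "range F \<subseteq> sets borel" "disjoint_family F"
      "\<Union> (range F) \<in> sets borel"
    show "(\<Sum>i. ennreal (ell (F i))) = ennreal (ell (\<Union> (range F)))"
      by (rule suminf_ennreal_eq)
        (use F nonneg sums_of_uniform_limit_measure[where \<nu>=\<nu> and ell=ell and B=B,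
          OF prob sets unif B F(1,2)] in auto)
  qed
  have em: "emeasure \<mu> A = ennreal (ell A)" if "A \<in> sets borel" for A
    unfolding \<mu>_def by (rule emeasure_measure_of_sigma[OF sa pos ca that])
  have sm: "sets \<mu> = sets borel" unfolding \<mu>_def using sigma_algebra.sets_measure_of_eq[OF sa] .
  have spm: "space \<mu> = UNIV" unfolding \<mu>_def using sigma_algebra.space_measure_of_eq[OF sa] .
  have pm: "prob_space \<mu>"
    by (rule prob_spaceI) (simp add: spm em one)
  have "measure \<mu> A = ell A" if "A \<in> sets borel" for A
    using em[OF that] nonneg[OF that] by (simp add: measure_def)
  then show ?thesis using pm sm by blast
qed

lemma weighted_oscillation_center:
  fixes \<phi> V :: "'a \<Rightarrow> real"
  assumes V0: "\<And>x. 0 \<le> V x" and w: "0 \<le> w" and M: "0 \<le> M" and \<phi>b: "\<And>z. \<bar>\<phi> z\<bar> \<le> 1"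
    and lip: "\<And>z z'. \<bar>\<phi> z - \<phi> z'\<bar> \<le> M * (2 + w * V z + w * V z')"
  shows "\<exists>c. \<forall>z. \<bar>\<phi> z - c\<bar> \<le> M * (1 + w * V z)"
proof -
  define c where "c = (SUP z. \<phi> z - M * (1 + w * V z))"
  have pos: "0 \<le> M * (1 + w * V z)" for z using M w V0[of z] by simp
  have bdd: "bdd_above (range (\<lambda>z. \<phi> z - M * (1 + w * V z)))"
  proof (rule bdd_aboveI[where M=1])
    fix r assume "r \<in> range (\<lambda>z. \<phi> z - M * (1 + w * V z))"
    then obtain z where "r = \<phi> z - M * (1 + w * V z)" by auto
    then show "r \<le> 1" using \<phi>b[of z] pos[of z] by (simp add: abs_le_iff)
  qed
  have up: "\<phi> z - M * (1 + w * V z) \<le> c" for z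
    unfolding c_def by (rule cSUP_upper[OF UNIV_I bdd])
  have low: "c \<le> \<phi> z + M * (1 + w * V z)" for z
    unfolding c_def
  proof (rule cSUP_least)
    fix z' show "\<phi> z' - M * (1 + w * V z') \<le> \<phi> z + M * (1 + w * V z)"
      using lip[of z' z] by (simp add: abs_le_iff algebra_simps)
  qed simp
  have "\<bar>\<phi> z - c\<bar> \<le> M * (1 + w * V z)" for z using up[of z] low[of z] by (simp add: abs_le_iff)
  then show ?thesis by blast
qed

text \<open>Inside the sublevel set \<open>{V x + V y \<le> R}\<close> the gain \<open>\<eta>\<close> in total variation
  pays for the weight; outside it the drift factor \<open>\<alpha>\<close> does, since there \<open>w R\<close> dominates
  the additive constant \<open>2 w b = \<eta>\<close>.\<close>

lemma weighted_contraction_constant: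
  fixes \<alpha> b R \<eta> :: real
  assumes a: "0 \<le> \<alpha>" "\<alpha> < 1" and b: "0 < b" and R: "2 * b / (1 - \<alpha>) < R"
    and e: "0 < \<eta>" "\<eta> \<le> 1"
  defines "w \<equiv> \<eta> / (2 * b)"
  shows "\<exists>\<gamma>. 0 < \<gamma> \<and> \<gamma> < 1 \<and> (\<forall>M s \<tau>. 0 \<le> M \<longrightarrow> 0 \<le> s \<longrightarrow> \<tau> \<le> 1 \<longrightarrow> (s \<le> R \<longrightarrow> \<tau> \<le> 1 - \<eta>) \<longrightarrow>
           M * (2 * \<tau> + w * \<alpha> * s + 2 * w * b) \<le> \<gamma> * M * (2 + w * s))"
proof -
  define \<gamma>2 where "\<gamma>2 = (2 + \<eta> + \<alpha> * w * R) / (2 + w * R)"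
  define \<gamma> where "\<gamma> = max (1 - \<eta> / 2) (max \<alpha> \<gamma>2)"
  have wpos: "0 < w" unfolding w_def using e b by simp
  have Rpos: "0 < R" using R a b by (smt (verit) divide_pos_pos)
  have R2: "2 * b < R * (1 - \<alpha>)" using R a by (simp add: pos_divide_less_eq)
  have wb: "2 * w * b = \<eta>" unfolding w_def using b by simp
  have den: "0 < 2 + w * R" using wpos Rpos by (simp add: add_pos_pos)
  have key: "\<eta> < w * R * (1 - \<alpha>)"
  proof -
    have "w * R * (1 - \<alpha>) = \<eta> * (R * (1 - \<alpha>)) / (2 * b)" unfolding w_def by simp
    also have "\<dots> > \<eta> * (2 * b) / (2 * b)"
      using R2 e b by (intro divide_strict_right_mono mult_strict_left_mono) auto
    finally show ?thesis using b by simp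
  qed
  have g2lt: "\<gamma>2 < 1" unfolding \<gamma>2_def using key den by (simp add: algebra_simps)
  have g2eq: "\<gamma>2 * (2 + w * R) = 2 + \<eta> + \<alpha> * w * R" unfolding \<gamma>2_def using den by simp
  have ga: "\<alpha> \<le> \<gamma>" and ge: "1 - \<eta> / 2 \<le> \<gamma>" and gg2: "\<gamma>2 \<le> \<gamma>" unfolding \<gamma>_def by auto
  have bound: "M * (2 * \<tau> + w * \<alpha> * s + 2 * w * b) \<le> \<gamma> * M * (2 + w * s)"
    if M: "0 \<le> M" and s: "0 \<le> s" and tau: "\<tau> \<le> 1" and small: "s \<le> R \<longrightarrow> \<tau> \<le> 1 - \<eta>" for M s \<tau>
  proof -
    have ws: "0 \<le> w * s" using wpos s by simp
    have main: "2 * \<tau> + w * \<alpha> * s + \<eta> \<le> \<gamma> * (2 + w * s)"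
    proof (cases "s \<le> R")
      case True
      have "2 * \<tau> + w * \<alpha> * s + \<eta> \<le> 2 - \<eta> + \<alpha> * (w * s)"
        using small True by (simp add: algebra_simps)
      also have "\<dots> \<le> 2 * \<gamma> + \<gamma> * (w * s)"
        using ge mult_right_mono[OF ga ws] by linarith
      finally show ?thesis by (simp add: algebra_simps)
    next
      case False
      have "2 * \<tau> + w * \<alpha> * s + \<eta> \<le> 2 + \<eta> + \<alpha> * w * R + \<alpha> * (w * (s - R))"
        using tau by (simp add: algebra_simps)
      also have "\<dots> = \<gamma>2 * (2 + w * R) + \<alpha> * (w * (s - R))" using g2eq by simp
      also have "\<dots> \<le> \<gamma> * (2 + w * R) + \<gamma> * (w * (s - R))"
      proof -
        have "0 \<le> w * (s - R)" using False wpos by simp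
        then show ?thesis using mult_right_mono[OF gg2 less_imp_le[OF den]] mult_right_mono[OF ga]
          by (meson add_mono)
      qed
      also have "\<dots> = \<gamma> * (2 + w * s)" by (simp add: algebra_simps)
      finally show ?thesis .
    qed
    have "M * (2 * \<tau> + w * \<alpha> * s + 2 * w * b) = M * (2 * \<tau> + w * \<alpha> * s + \<eta>)" using wb by simp
    also have "\<dots> \<le> M * (\<gamma> * (2 + w * s))" using main M by (rule mult_left_mono)
    finally show ?thesis by (simp add: algebra_simps)
  qed
  have "0 < \<gamma>" "\<gamma> < 1" unfolding \<gamma>_def using g2lt a e by auto
  with bound show ?thesis by blast
qed

lemma sublevel_subset_cball:
  fixes V :: "'a::real_normed_vector \<Rightarrow> real"
  assumes "filterlim V at_top at_infinity"
  obtains r where "0 < r" "\<And>x. V x \<le> R \<Longrightarrow> x \<in> cball 0 r"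
proof -
  have "\<forall>\<^sub>F x in at_infinity. R + 1 \<le> V x" using assms unfolding filterlim_at_top by blast
  then obtain r where r: "\<And>x. r \<le> norm x \<Longrightarrow> R + 1 \<le> V x" unfolding eventually_at_infinity by blast
  have "x \<in> cball 0 (max r 1)" if "V x \<le> R" for x
  proof -
    have "\<not> r \<le> norm x" using r[of x] that by linarith
    then show ?thesis by simp
  qed
  then show ?thesis by (intro that[of "max r 1"]) auto
qed

lemma power_floor_le_exp:
  fixes \<gamma> T t :: real
  assumes g: "0 < \<gamma>" "\<gamma> < 1" and T: "0 < T" and t: "0 \<le> t"
  shows "\<gamma> ^ nat \<lfloor>t / T\<rfloor> \<le> exp (- (- ln \<gamma> / T) * t) / \<gamma>"
proof -
  define n where "n = nat \<lfloor>t / T\<rfloor>"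
  have lng: "ln \<gamma> < 0" using g by simp
  have "t / T < real n + 1" unfolding n_def using t T by linarith
  then have "real n * ln \<gamma> \<le> (t / T - 1) * ln \<gamma>"
    using lng by (intro mult_right_mono_neg) auto
  also have "\<dots> = - (- ln \<gamma> / T) * t - ln \<gamma>"
    using T by (simp add: field_simps)
  finally have "exp (real n * ln \<gamma>) \<le> exp (- (- ln \<gamma> / T) * t) * exp (- ln \<gamma>)"
    by (simp add: exp_add[symmetric])
  moreover have "\<gamma> ^ n = exp (real n * ln \<gamma>)" using g by (simp add: exp_of_nat_mult)
  moreover have "exp (- ln \<gamma>) = 1 / \<gamma>" using g by (simp add: exp_minus inverse_eq_divide)
  ultimately show ?thesis unfolding n_def by simp
qed

section \<open>Transition semigroups\<close>

locale transition_semigroup =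
  fixes P :: "real \<Rightarrow> 'a::euclidean_space \<Rightarrow> 'a measure"
  assumes markov: "markov_semigroup P"
begin

lemma prob_space_P: "0 \<le> t \<Longrightarrow> prob_space (P t x)"
  using markov unfolding markov_semigroup_def by blast

lemma sets_P: "0 \<le> t \<Longrightarrow> sets (P t x) = sets borel"
  using markov unfolding markov_semigroup_def by blast

lemma space_P: "0 \<le> t \<Longrightarrow> space (P t x) = UNIV"
  by (metis sets_P sets_eq_imp_space_eq space_borel)

lemma P_measurable: "0 \<le> t \<Longrightarrow> P t \<in> borel \<rightarrow>\<^sub>M subprob_algebra borel"
  using markov unfolding markov_semigroup_def by blast

lemma P_measurable_sets_borel:
  "sets M = sets borel \<Longrightarrow> 0 \<le> t \<Longrightarrow> P t \<in> M \<rightarrow>\<^sub>M subprob_algebra borel"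
  using P_measurable
  by (subst measurable_cong_sets[where M'=borel and N'="subprob_algebra borel"]) auto

lemma P_0: "P 0 x = return borel x"
  using markov unfolding markov_semigroup_def by blast

lemma P_add: "0 \<le> s \<Longrightarrow> 0 \<le> t \<Longrightarrow> P (s + t) x = P s x \<bind> P t"
  using markov unfolding markov_semigroup_def by blast

lemma measurable_P: "f \<in> borel_measurable borel \<Longrightarrow> 0 \<le> t \<Longrightarrow> f \<in> borel_measurable (P t x)"
  by (subst measurable_cong_sets[where M'=borel and N'=borel]) (simp_all add: sets_P)

lemma prob_space_bind_P:
  assumes "prob_space M" "sets M = sets borel" "0 \<le> t"
  shows "prob_space (M \<bind> P t)"
proof -
  interpret prob_space M by fact
  show ?thesis
    by (rule prob_space_bind[where S=borel])
      (use assms prob_space_P P_measurable_sets_borel in auto)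
qed

lemma sets_bind_P:
  assumes "prob_space M" "sets M = sets borel" "0 \<le> t"
  shows "sets (M \<bind> P t) = sets borel"
proof -
  interpret prob_space M by fact
  show ?thesis by (rule sets_bind) (use assms sets_P not_empty in auto)
qed

lemma measure_P_measurable:
  assumes "0 \<le> t" "A \<in> sets borel"
  shows "(\<lambda>x. measure (P t x) A) \<in> borel_measurable borel"
proof -
  have "(\<lambda>x. emeasure (P t x) A) \<in> borel_measurable borel"
    by (rule measurable_emeasure_kernel[OF P_measurable[OF assms(1)] assms(2)])
  then show ?thesis unfolding measure_def by measurable
qed

lemma measure_P_le_1: "0 \<le> t \<Longrightarrow> measure (P t x) A \<le> 1"
  using prob_space.prob_le_1[OF prob_space_P] .

lemma integral_P_measurable:
  fixes f :: "'a \<Rightarrow> real"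
  assumes "0 \<le> t" "f \<in> borel_measurable borel"
  shows "(\<lambda>x. \<integral>y. f y \<partial>P t x) \<in> borel_measurable borel"
  using P_measurable[OF assms(1)] integral_measurable_subprob_algebra[OF assms(2)]
  by (rule measurable_compose)

lemma integral_bind_P:
  fixes f :: "'a \<Rightarrow> real"
  assumes M: "prob_space M" "sets M = sets borel" and t: "0 \<le> t"
    and f: "f \<in> borel_measurable borel" and fb: "\<And>z. \<bar>f z\<bar> \<le> B"
  shows "(\<integral>z. f z \<partial>(M \<bind> P t)) = (\<integral>x. (\<integral>z. f z \<partial>P t x) \<partial>M)"
proof -
  interpret prob_space M by fact
  show ?thesis
  proof (rule integral_bind[where K=borel and B=B and B'=1])
    show "P t \<in> M \<rightarrow>\<^sub>M subprob_algebra borel" using P_measurable_sets_borel[OF M(2) t] .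
    show "finite_measure M" by unfold_locales
    show "AE x in M. emeasure (P t x) (space (P t x)) \<le> ennreal 1"
      using prob_space.emeasure_space_1[OF prob_space_P[OF t]] by simp
  qed (use f fb in auto)
qed

lemma measure_bind_P:
  assumes M: "prob_space M" "sets M = sets borel" and t: "0 \<le> t" and A: "A \<in> sets borel"
  shows "measure (M \<bind> P t) A = (\<integral>x. measure (P t x) A \<partial>M)"
proof -
  interpret prob_space M by fact
  show ?thesis by (rule measure_bind[OF P_measurable_sets_borel[OF M(2) t] A])
qed

lemma bind_P_assoc:
  assumes M: "sets M = sets borel" and st: "0 \<le> s" "0 \<le> t"
  shows "(M \<bind> P s) \<bind> P t = M \<bind> P (s + t)"
proof -
  have "(M \<bind> P s) \<bind> P t = M \<bind> (\<lambda>x. P s x \<bind> P t)"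
    by (rule bind_assoc[OF P_measurable_sets_borel[OF M st(1)] P_measurable[OF st(2)]])
  also have "\<dots> = M \<bind> P (s + t)"
    by (rule bind_cong) (auto simp: P_add[OF st])
  finally show ?thesis .
qed

lemma bind_P_0:
  assumes "sets M = sets borel"
  shows "M \<bind> P 0 = M"
proof -
  have "P 0 = return borel" by (rule ext) (simp add: P_0)
  then show ?thesis using bind_return''[OF assms] by simp
qed

lemma tv_norm_P_le_1: "0 \<le> t \<Longrightarrow> tv_norm (P t x) (P t y) \<le> 1"
  by (intro tv_norm_le_1 prob_space_P)

lemma lyapunov_iterate:
  fixes V :: "'a \<Rightarrow> real"
  assumes Vm: "V \<in> borel_measurable borel" and V0: "\<And>x. 0 \<le> V x" and ts: "0 \<le> ts"
    and a: "0 \<le> \<alpha>" "\<alpha> < 1" and b: "0 \<le> \<beta>"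
    and HL: "\<And>x. (\<integral>\<^sup>+ y. ennreal (V y) \<partial>P ts x) \<le> ennreal (\<alpha> * V x + \<beta>)"
  shows "(\<integral>\<^sup>+ y. ennreal (V y) \<partial>P (real m * ts) x) \<le> ennreal (\<alpha> ^ m * V x + \<beta> / (1 - \<alpha>))"
proof (induction m arbitrary: x)
  case 0
  have "(\<integral>\<^sup>+ y. ennreal (V y) \<partial>P 0 x) = ennreal (V x)"
    using nn_integral_return[of x borel "\<lambda>y. ennreal (V y)"] Vm by (simp add: P_0)
  moreover have "0 \<le> \<beta> / (1 - \<alpha>)" using a b by simp
  ultimately show ?case by (simp add: ennreal_leI)
next
  case (Suc m)
  define c where "c = \<beta> / (1 - \<alpha>)"
  have c0: "0 \<le> c" unfolding c_def using a b by simp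
  have cc: "\<alpha> * c + \<beta> = c" unfolding c_def using a by (simp add: field_simps)
  have t0: "0 \<le> real m * ts" using ts by simp
  define M where "M = P (real m * ts) x"
  interpret M: prob_space M unfolding M_def by (rule prob_space_P[OF t0])
  have sM: "sets M = sets borel" unfolding M_def by (rule sets_P[OF t0])
  have "real (Suc m) * ts = real m * ts + ts" by (simp add: algebra_simps)
  then have PS: "P (real (Suc m) * ts) x = M \<bind> P ts" unfolding M_def using P_add[OF t0 ts] by simp
  have Vme: "(\<lambda>y. ennreal (V y)) \<in> borel_measurable borel" using Vm by measurable
  have VmM: "(\<lambda>y. ennreal (V y)) \<in> borel_measurable M"
    using Vme by (subst measurable_cong_sets[where M'=borel and N'=borel]) (simp_all add: sM)
  have "(\<integral>\<^sup>+ y. ennreal (V y) \<partial>P (real (Suc m) * ts) x) =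
      (\<integral>\<^sup>+ y. (\<integral>\<^sup>+ z. ennreal (V z) \<partial>P ts y) \<partial>M)"
    unfolding PS by (rule nn_integral_bind[OF Vme P_measurable_sets_borel[OF sM ts]])
  also have "\<dots> \<le> (\<integral>\<^sup>+ y. ennreal (\<alpha> * V y + \<beta>) \<partial>M)"
    by (intro nn_integral_mono HL)
  also have "\<dots> = (\<integral>\<^sup>+ y. ennreal \<alpha> * ennreal (V y) + ennreal \<beta> \<partial>M)"
    using a b V0 by (intro nn_integral_cong) (simp add: ennreal_plus ennreal_mult)
  also have "\<dots> = ennreal \<alpha> * (\<integral>\<^sup>+ y. ennreal (V y) \<partial>M) + ennreal \<beta>"
    using VmM by (simp add: nn_integral_add nn_integral_cmult M.emeasure_space_1)
  also have "\<dots> \<le> ennreal \<alpha> * ennreal (\<alpha> ^ m * V x + c) + ennreal \<beta>"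
    using Suc.IH[of x] unfolding M_def c_def by (intro add_right_mono mult_left_mono) auto
  also have "\<dots> = ennreal (\<alpha> * (\<alpha> ^ m * V x + c) + \<beta>)"
    using a b c0 V0[of x] by (simp add: ennreal_plus ennreal_mult)
  also have "\<alpha> * (\<alpha> ^ m * V x + c) + \<beta> = \<alpha> ^ Suc m * V x + c"
    using cc by (simp add: algebra_simps)
  finally show ?case unfolding c_def .
qed

lemma lyapunov_iterate_le:
  fixes V :: "'a \<Rightarrow> real"
  assumes Vm: "V \<in> borel_measurable borel" and V0: "\<And>x. 0 \<le> V x" and ts: "0 \<le> ts"
    and a: "0 \<le> \<alpha>" "\<alpha> < 1" and b: "0 \<le> \<beta>"
    and HL: "\<And>x. (\<integral>\<^sup>+ y. ennreal (V y) \<partial>P ts x) \<le> ennreal (\<alpha> * V x + \<beta>)"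
    and c: "\<beta> / (1 - \<alpha>) \<le> c"
  shows "1 \<le> m \<Longrightarrow> (\<integral>\<^sup>+ y. ennreal (V y) \<partial>P (real m * ts) x) \<le> ennreal (\<alpha> * V x + c)"
    and "(\<integral>\<^sup>+ y. ennreal (V y) \<partial>P (real m * ts) x) \<le> ennreal (V x + c)"
proof -
  note iter = lyapunov_iterate[OF Vm V0 ts a b HL, of m x]
  have "\<alpha> ^ m * V x \<le> V x" using a V0[of x] by (intro mult_left_le_one_le power_le_one) auto
  then show "(\<integral>\<^sup>+ y. ennreal (V y) \<partial>P (real m * ts) x) \<le> ennreal (V x + c)"
    using c by (intro order.trans[OF iter ennreal_leI]) simp
  assume "1 \<le> m"
  then have "\<alpha> ^ m \<le> \<alpha> ^ 1" using a by (intro power_decreasing) auto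
  then have "\<alpha> ^ m * V x \<le> \<alpha> * V x" using V0[of x] by (simp add: mult_right_mono)
  then show "(\<integral>\<^sup>+ y. ennreal (V y) \<partial>P (real m * ts) x) \<le> ennreal (\<alpha> * V x + c)"
    using c by (intro order.trans[OF iter ennreal_leI]) simp
qed

text \<open>After centring \<open>\<phi>\<close>, split it into its truncation at \<open>\<plusminus>M\<close>, controlled by total
  variation, and a remainder of size at most \<open>M w V\<close>, controlled by the drift.\<close>

lemma abs_integral_diff_le_weighted:
  fixes V :: "'a \<Rightarrow> real" and \<phi> :: "'a \<Rightarrow> real"
  assumes Vm: "V \<in> borel_measurable borel" and V0: "\<And>x. 0 \<le> V x" and t: "0 \<le> t"
    and HK: "\<And>x. (\<integral>\<^sup>+ y. ennreal (V y) \<partial>P t x) \<le> ennreal (\<alpha> * V x + b)"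
    and a: "0 \<le> \<alpha>" and b: "0 \<le> b" and w: "0 \<le> w"
    and \<phi>m: "\<phi> \<in> borel_measurable borel" and \<phi>b: "\<And>z. \<bar>\<phi> z\<bar> \<le> 1" and M: "0 \<le> M"
    and lip: "\<And>z z'. \<bar>\<phi> z - \<phi> z'\<bar> \<le> M * (2 + w * V z + w * V z')"
  shows "\<bar>(\<integral>z. \<phi> z \<partial>P t x) - (\<integral>z. \<phi> z \<partial>P t y)\<bar>
           \<le> M * (2 * tv_norm (P t x) (P t y) + w * \<alpha> * (V x + V y) + 2 * w * b)"
proof -
  obtain c where c: "\<And>z. \<bar>\<phi> z - c\<bar> \<le> M * (1 + w * V z)"
    using weighted_oscillation_center[where \<phi>=\<phi> and V=V, OF V0 w M \<phi>b lip] by blast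
  define \<psi> where "\<psi> z = \<phi> z - c" for z
  have \<psi>b: "\<bar>\<psi> z\<bar> \<le> M * (1 + w * V z)" for z unfolding \<psi>_def by (rule c)
  define \<psi>1 where "\<psi>1 z = max (- M) (min M (\<psi> z))" for z
  define \<psi>2 where "\<psi>2 z = \<psi> z - \<psi>1 z" for z
  have \<psi>1b: "\<bar>\<psi>1 z\<bar> \<le> M" for z unfolding \<psi>1_def using M by (simp add: abs_le_iff)
  have \<psi>2b: "\<bar>\<psi>2 z\<bar> \<le> M * w * V z" for z
  proof -
    have "0 \<le> M * (w * V z)" using M w V0[of z] by simp
    then show ?thesis
      using \<psi>b[of z] M unfolding \<psi>2_def \<psi>1_def
      by (auto simp: abs_le_iff max_def min_def algebra_simps)
  qed
  have \<psi>2B: "\<bar>\<psi>2 z\<bar> \<le> 1 + \<bar>c\<bar> + M" for z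
  proof -
    have "\<bar>\<psi> z\<bar> \<le> 1 + \<bar>c\<bar>" unfolding \<psi>_def using abs_triangle_ineq4[of "\<phi> z" c] \<phi>b[of z] by linarith
    then show ?thesis using \<psi>1b[of z] abs_triangle_ineq4[of "\<psi> z" "\<psi>1 z"] unfolding \<psi>2_def
      by linarith
  qed
  have \<psi>m: "\<psi> \<in> borel_measurable borel" unfolding \<psi>_def using \<phi>m by measurable
  have \<psi>1m: "\<psi>1 \<in> borel_measurable borel" unfolding \<psi>1_def using \<psi>m by measurable
  have \<psi>2m: "\<psi>2 \<in> borel_measurable borel" unfolding \<psi>2_def using \<psi>m \<psi>1m by measurable
  note int\<psi>1 = integrable_bounded_borel[OF prob_space_P[OF t] sets_P[OF t] \<psi>1m \<psi>1b]
  note int\<psi>2 = integrable_bounded_borel[OF prob_space_P[OF t] sets_P[OF t] \<psi>2m \<psi>2B]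
  have dec: "(\<integral>z. \<phi> z \<partial>P t u) = (\<integral>z. \<psi>1 z \<partial>P t u) + (\<integral>z. \<psi>2 z \<partial>P t u) + c" for u
  proof -
    interpret prob_space "P t u" by (rule prob_space_P[OF t])
    have "\<phi> = (\<lambda>z. \<psi>1 z + \<psi>2 z + c)" unfolding \<psi>2_def \<psi>_def by auto
    then have "(\<integral>z. \<phi> z \<partial>P t u) = (\<integral>z. \<psi>1 z + \<psi>2 z + c \<partial>P t u)" by simp
    also have "\<dots> = (\<integral>z. \<psi>1 z \<partial>P t u) + (\<integral>z. \<psi>2 z \<partial>P t u) + c"
      using int\<psi>1 int\<psi>2 by (simp add: prob_space)
    finally show ?thesis .
  qed
  have int2: "\<bar>\<integral>z. \<psi>2 z \<partial>P t u\<bar> \<le> M * w * (\<alpha> * V u + b)" for u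
  proof -
    have "0 \<le> \<alpha> * V u + b" using a b V0[of u] by simp
    note VI = integrable_nonneg_of_nn_integral_le[OF sets_P[OF t] Vm V0 HK[of u] this]
    have "\<bar>\<integral>z. \<psi>2 z \<partial>P t u\<bar> \<le> (\<integral>z. M * w * V z \<partial>P t u)"
      by (rule integral_abs_bound_integral) (use int\<psi>2 VI(1) \<psi>2b in auto)
    also have "\<dots> = M * w * (\<integral>z. V z \<partial>P t u)" by simp
    also have "\<dots> \<le> M * w * (\<alpha> * V u + b)" using VI(2) M w by (intro mult_left_mono) auto
    finally show ?thesis .
  qed
  have int1: "\<bar>(\<integral>z. \<psi>1 z \<partial>P t x) - (\<integral>z. \<psi>1 z \<partial>P t y)\<bar> \<le> 2 * M * tv_norm (P t x) (P t y)"
    by (rule abs_integral_diff_le_tv_norm_bounded[OF prob_space_P[OF t] sets_P[OF t]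
          prob_space_P[OF t] sets_P[OF t] \<psi>1m \<psi>1b])
  have "\<bar>(\<integral>z. \<phi> z \<partial>P t x) - (\<integral>z. \<phi> z \<partial>P t y)\<bar>
      \<le> \<bar>(\<integral>z. \<psi>1 z \<partial>P t x) - (\<integral>z. \<psi>1 z \<partial>P t y)\<bar> + \<bar>\<integral>z. \<psi>2 z \<partial>P t x\<bar> + \<bar>\<integral>z. \<psi>2 z \<partial>P t y\<bar>"
    unfolding dec by linarith
  also have "\<dots> \<le> 2 * M * tv_norm (P t x) (P t y) + M * w * (\<alpha> * V x + b) + M * w * (\<alpha> * V y + b)"
    using int1 int2[of x] int2[of y] by linarith
  also have "\<dots> = M * (2 * tv_norm (P t x) (P t y) + w * \<alpha> * (V x + V y) + 2 * w * b)"
    by (simp add: algebra_simps)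
  finally show ?thesis .
qed

lemma integral_P_affine_indicator:
  assumes t: "0 \<le> t" and A: "A \<in> sets borel"
  shows "(\<integral>z. 2 * indicator A z - 1 \<partial>P t x) = 2 * measure (P t x) A - 1"
proof -
  interpret prob_space "P t x" by (rule prob_space_P[OF t])
  have "integrable (P t x) (\<lambda>z. indicator A z :: real)"
    using A sets_P[OF t] by (intro integrable_real_indicator)
      (auto simp: emeasure_finite less_top[symmetric])
  moreover have "prob UNIV = 1" using prob_space space_P[OF t] by simp
  ultimately show ?thesis by (simp add: space_P[OF t])
qed

lemma tv_norm_P_le_half_SUP:
  assumes u: "0 \<le> u"
  shows "tv_norm (P u x) (P u y) \<le> (SUP f \<in> {f. f \<in> borel_measurable borel \<and> (\<forall>z. \<bar>f z\<bar> \<le> 1)}.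
           semigroup_apply P u f x - semigroup_apply P u f y) / 2"
proof -
  define F where "F = {f :: 'a \<Rightarrow> real. f \<in> borel_measurable borel \<and> (\<forall>z. \<bar>f z\<bar> \<le> 1)}"
  define S where "S = (SUP f \<in> F. semigroup_apply P u f x - semigroup_apply P u f y)"
  have abs_le_1: "\<bar>semigroup_apply P u f z\<bar> \<le> 1" if "f \<in> F" for f z
    using that unfolding semigroup_apply_def F_def
    by (intro abs_integral_le_prob[OF prob_space_P[OF u]]) (auto intro: measurable_P[OF _ u])
  have bdd: "bdd_above ((\<lambda>f. semigroup_apply P u f x - semigroup_apply P u f y) ` F)"
  proof (rule bdd_aboveI[where M=2])
    fix r assume "r \<in> (\<lambda>f. semigroup_apply P u f x - semigroup_apply P u f y) ` F"
    then obtain f where "f \<in> F" "r = semigroup_apply P u f x - semigroup_apply P u f y" by auto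
    then show "r \<le> 2" using abs_le_1[of f x] abs_le_1[of f y] by (simp add: abs_le_iff)
  qed
  have "tv_norm (P u x) (P u y) \<le> S / 2"
  proof (rule tv_norm_le)
    fix A :: "'a set" assume A: "A \<in> sets borel"
    define f where "f s z = s * (2 * indicator A z - 1 :: real)" for s z
    have eq: "semigroup_apply P u (f s) z = s * (2 * measure (P u z) A - 1)" for s z
      unfolding semigroup_apply_def f_def by (simp add: integral_P_affine_indicator[OF u A])
    have le_S: "semigroup_apply P u (f s) x - semigroup_apply P u (f s) y \<le> S" if "\<bar>s\<bar> = 1" for s
    proof -
      have "f s \<in> F" unfolding F_def f_def using A that by (auto simp: indicator_def abs_mult)
      then show ?thesis unfolding S_def by (rule cSUP_upper[OF _ bdd])
    qed
    have "2 * (measure (P u x) A - measure (P u y) A) \<le> S"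
      and "2 * (measure (P u y) A - measure (P u x) A) \<le> S"
      using le_S[of 1] le_S[of "-1"] unfolding eq by (simp_all add: algebra_simps)
    then show "\<bar>measure (P u x) A - measure (P u y) A\<bar> \<le> S / 2"
      unfolding abs_le_iff by auto
  qed
  then show ?thesis unfolding S_def F_def .
qed

lemma tv_norm_P_tendsto_0:
  assumes H2: "hyp_H2 P" and u: "0 < u"
  shows "((\<lambda>y. tv_norm (P u x) (P u y)) \<longlongrightarrow> 0) (at x)"
proof -
  define D where "D y = (SUP f \<in> {f. f \<in> borel_measurable borel \<and> (\<forall>z. \<bar>f z\<bar> \<le> 1)}.
    semigroup_apply P u f x - semigroup_apply P u f y)" for y
  have "(D \<longlongrightarrow> 0) (at x)" using H2 u unfolding hyp_H2_def D_def by blast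
  then have lim: "((\<lambda>y. D y / 2) \<longlongrightarrow> 0 / 2) (at x)" by (intro tendsto_divide tendsto_const) simp_all
  have nonneg: "0 \<le> tv_norm (P u x) (P u y)" for y
    using u by (intro tv_norm_nonneg prob_space_P) auto
  have le: "tv_norm (P u x) (P u y) \<le> D y / 2" for y
    unfolding D_def using u by (intro tv_norm_P_le_half_SUP) auto
  show ?thesis
  proof (rule tendsto_sandwich[OF _ _ tendsto_const])
    show "\<forall>\<^sub>F y in at x. 0 \<le> tv_norm (P u x) (P u y)" using nonneg by simp
    show "\<forall>\<^sub>F y in at x. tv_norm (P u x) (P u y) \<le> D y / 2" using le by simp
    show "((\<lambda>y. D y / 2) \<longlongrightarrow> 0) (at x)" using lim by simp
  qed
qed

definition tv_dist_P :: "real \<Rightarrow> 'a \<times> 'a \<Rightarrow> real" where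
  "tv_dist_P u p = tv_norm (P u (fst p)) (P u (snd p))"

lemma continuous_on_tv_dist_P:
  assumes H2: "hyp_H2 P" and u: "0 < u"
  shows "continuous_on UNIV (tv_dist_P u)"
proof (rule continuous_at_imp_continuous_on, intro ballI)
  fix p :: "'a \<times> 'a" assume "p \<in> UNIV"
  obtain a b where p: "p = (a, b)" by (cases p)
  have u0: "0 \<le> u" using u by simp
  have pr: "prob_space (P u z)" for z by (rule prob_space_P[OF u0])
  define G where "G a z = tv_norm (P u z) (P u a)" for a z
  have Gc: "isCont (G a) a" for a
  proof -
    have "((\<lambda>y. tv_norm (P u a) (P u y)) \<longlongrightarrow> 0) (at a)" by (rule tv_norm_P_tendsto_0[OF H2 u])
    then have "(G a \<longlongrightarrow> G a a) (at a)" unfolding G_def by (simp add: tv_norm_self tv_norm_commute)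
    then show ?thesis by (simp add: isCont_def)
  qed
  have G0: "G a a = 0" for a unfolding G_def by (simp add: tv_norm_self)
  have "((\<lambda>q. G a (fst q)) \<longlongrightarrow> G a (fst (a, b))) (at (a, b))"
    by (rule isCont_tendsto_compose[OF _ tendsto_fst[OF tendsto_ident_at]]) (simp add: Gc)
  then have l1: "((\<lambda>q. G a (fst q)) \<longlongrightarrow> 0) (at (a, b))" using G0 by simp
  have "((\<lambda>q. G b (snd q)) \<longlongrightarrow> G b (snd (a, b))) (at (a, b))"
    by (rule isCont_tendsto_compose[OF _ tendsto_snd[OF tendsto_ident_at]]) (simp add: Gc)
  then have l2: "((\<lambda>q. G b (snd q)) \<longlongrightarrow> 0) (at (a, b))" using G0 by simp
  have bnd: "\<bar>tv_dist_P u q - tv_dist_P u (a, b)\<bar> \<le> G a (fst q) + G b (snd q)" for q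
    unfolding tv_dist_P_def G_def by (simp add: abs_tv_norm_diff_le pr)
  have "((\<lambda>q. tv_dist_P u q - tv_dist_P u (a, b)) \<longlongrightarrow> 0) (at (a, b))"
    by (rule Lim_null_comparison[OF _ tendsto_add_zero[OF l1 l2]]) (use bnd in auto)
  then have "(tv_dist_P u \<longlongrightarrow> tv_dist_P u (a, b)) (at (a, b))" by (rule LIM_zero_cancel)
  then show "isCont (tv_dist_P u) p" unfolding p by (simp add: isCont_def)
qed

lemma tv_norm_P_uniformly_small:
  assumes H2: "hyp_H2 P" and s: "0 < s"
  shows "\<exists>\<delta>>0. \<forall>x'\<in>cball 0 R0. \<forall>y'\<in>cball 0 R0. dist x' y' \<le> \<delta> \<longrightarrow> tv_norm (P s x') (P s y') \<le> 1 / 4"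
proof -
  define K where "K = cball (0::'a) R0 \<times> cball (0::'a) R0"
  have cK: "compact K" unfolding K_def by (rule compact_Times[OF compact_cball compact_cball])
  have "continuous_on K (tv_dist_P s)"
    by (rule continuous_on_subset[OF continuous_on_tv_dist_P[OF H2 s]]) simp
  then have "uniformly_continuous_on K (tv_dist_P s)" using cK
    by (rule compact_uniformly_continuous)
  then obtain d where d: "d > 0" and
    dd: "\<And>p q. p \<in> K \<Longrightarrow> q \<in> K \<Longrightarrow> dist q p < d \<Longrightarrow> dist (tv_dist_P s q) (tv_dist_P s p) < 1 / 4"
    unfolding uniformly_continuous_on_def by (metis divide_pos_pos zero_less_numeral zero_less_one)
  show ?thesis
  proof (intro exI[of _ "d / 2"] conjI ballI impI)
    show "0 < d / 2" using d by simp
    fix x' y' :: 'a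
    assume x': "x' \<in> cball 0 R0" and y': "y' \<in> cball 0 R0" and dl: "dist x' y' \<le> d / 2"
    have "dist (x', y') (x', x') = dist y' x'" by (simp add: dist_Pair_Pair)
    also have "\<dots> < d" using dl d by (simp add: dist_commute)
    finally have "dist (tv_dist_P s (x', y')) (tv_dist_P s (x', x')) < 1 / 4"
      by (intro dd) (use x' y' in \<open>auto simp: K_def\<close>)
    then show "tv_norm (P s x') (P s y') \<le> 1 / 4"
      by (simp add: tv_dist_P_def dist_real_def tv_norm_self)
  qed
qed

text \<open>A coupling charges pairs of close points of a ball, and one more time unit makes the laws
  from such points \<open>1/4\<close>-close; this is the strict gain over the trivial bound \<open>1\<close>.\<close>

lemma tv_norm_P_lt_1_of_coupling:
  assumes t: "0 \<le> t" and s: "0 \<le> s"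
    and close: "\<forall>x'\<in>cball 0 R0. \<forall>y'\<in>cball 0 R0. dist x' y' \<le> \<delta> \<longrightarrow> tv_norm (P s x') (P s y') \<le> 1 / 4"
    and pos: "(SUP \<pi> \<in> couplings (P t x) (P t y).
        measure \<pi> {(x', y'). dist x' y' \<le> \<delta> \<and> x' \<in> cball 0 R0 \<and> y' \<in> cball 0 R0}) > 0"
  shows "tv_norm (P (t + s) x) (P (t + s) y) < 1"
proof -
  define \<Gamma> where "\<Gamma> = {(x', y'). dist x' y' \<le> \<delta> \<and> x' \<in> cball (0::'a) R0 \<and> y' \<in> cball (0::'a) R0}"
  define C where "C = couplings (P t x) (P t y)"
  have Cne: "C \<noteq> {}"
    using pair_measure_in_couplings[OF prob_space_P[OF t] sets_P[OF t]
        prob_space_P[OF t] sets_P[OF t]]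
    unfolding C_def by auto
  have bdd: "bdd_above ((\<lambda>\<pi>. measure \<pi> \<Gamma>) ` C)"
    unfolding C_def couplings_def by (intro bdd_aboveI[where M=1])
      (auto intro: prob_space.prob_le_1)
  obtain \<pi> where \<pi>C: "\<pi> \<in> C" and p\<pi>: "0 < measure \<pi> \<Gamma>"
    using less_cSUP_iff[OF Cne bdd, of 0] pos unfolding \<Gamma>_def C_def by blast
  have "closed {p :: 'a \<times> 'a. dist (fst p) (snd p) \<le> \<delta>}"
    by (intro closed_Collect_le continuous_intros)
  moreover have "\<Gamma> = {p. dist (fst p) (snd p) \<le> \<delta>} \<inter> (cball 0 R0 \<times> cball 0 R0)"
    unfolding \<Gamma>_def by auto
  ultimately have "closed \<Gamma>" by (metis closed_Int closed_Times closed_cball)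
  then have \<Gamma>b: "\<Gamma> \<in> sets borel" by (rule borel_closed)
  have "\<bar>measure (P (t + s) x) A - measure (P (t + s) y) A\<bar> \<le> 1 - 3 / 4 * measure \<pi> \<Gamma>"
    if A: "A \<in> sets borel" for A
  proof -
    define g where "g z = measure (P s z) A" for z
    have "measure (P (t + s) u) A = (\<integral>z. g z \<partial>P t u)" for u
      unfolding g_def P_add[OF t s] by (rule measure_bind_P[OF prob_space_P[OF t] sets_P[OF t] s A])
    moreover have "\<bar>(\<integral>z. g z \<partial>P t x) - (\<integral>z. g z \<partial>P t y)\<bar> \<le> 1 - (1 - 1 / 4) * measure \<pi> \<Gamma>"
    proof (rule abs_integral_diff_le_coupling[OF _ \<Gamma>b])
      show "\<pi> \<in> couplings (P t x) (P t y)" using \<pi>C unfolding C_def .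
      show "g \<in> borel_measurable borel" unfolding g_def by (rule measure_P_measurable[OF s A])
      fix x' y' assume "(x', y') \<in> \<Gamma>"
      then have "tv_norm (P s x') (P s y') \<le> 1 / 4" using close unfolding \<Gamma>_def by auto
      then show "\<bar>g x' - g y'\<bar> \<le> 1 / 4"
        unfolding g_def using abs_measure_diff_le_tv_norm[OF prob_space_P[OF s] prob_space_P[OF s] A]
        by (meson order_trans)
    qed (auto simp: g_def measure_P_le_1[OF s])
    ultimately show ?thesis by simp
  qed
  then have "tv_norm (P (t + s) x) (P (t + s) y) \<le> 1 - 3 / 4 * measure \<pi> \<Gamma>"
    by (rule tv_norm_le)
  then show ?thesis using p\<pi> by simp
qed

lemma tv_norm_P_uniform_bound_on_ball:
  assumes H1: "hyp_H1 P" and H2: "hyp_H2 P" and R: "0 < R"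
  shows "\<exists>T1. \<forall>u\<ge>T1. \<exists>\<eta>>0. \<eta> \<le> 1 \<and>
           (\<forall>x\<in>cball 0 R. \<forall>y\<in>cball 0 R. tv_norm (P u x) (P u y) \<le> 1 - \<eta>)"
proof -
  obtain R0 where H1': "\<forall>\<delta>>0. \<exists>T0>0. \<forall>t\<ge>T0. \<forall>x\<in>cball 0 R. \<forall>y\<in>cball 0 R.
     (SUP \<pi> \<in> couplings (P t x) (P t y).
        measure \<pi> {(x', y'). dist x' y' \<le> \<delta> \<and> x' \<in> cball 0 R0 \<and> y' \<in> cball 0 R0}) > 0"
    using H1 R unfolding hyp_H1_def by blast
  obtain \<delta> where \<delta>: "\<delta> > 0"
    and dl: "\<forall>x'\<in>cball 0 R0. \<forall>y'\<in>cball 0 R0. dist x' y' \<le> \<delta> \<longrightarrow> tv_norm (P 1 x') (P 1 y') \<le> 1 / 4"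
    using tv_norm_P_uniformly_small[OF H2, of 1 R0] by auto
  obtain T0 where T0: "T0 > 0" and T0': "\<forall>t\<ge>T0. \<forall>x\<in>cball 0 R. \<forall>y\<in>cball 0 R.
     (SUP \<pi> \<in> couplings (P t x) (P t y).
        measure \<pi> {(x', y'). dist x' y' \<le> \<delta> \<and> x' \<in> cball 0 R0 \<and> y' \<in> cball 0 R0}) > 0"
    using H1' \<delta> by blast
  show ?thesis
  proof (rule exI[of _ "T0 + 1"], intro allI impI)
    fix u assume u: "T0 + 1 \<le> u"
    have upos: "0 < u" using u T0 by simp
    define K where "K = cball (0::'a) R \<times> cball (0::'a) R"
    have cK: "compact K" unfolding K_def by (rule compact_Times[OF compact_cball compact_cball])
    have neK: "K \<noteq> {}" unfolding K_def using R by auto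
    have "continuous_on K (tv_dist_P u)"
      by (rule continuous_on_subset[OF continuous_on_tv_dist_P[OF H2 upos]]) simp
    \<comment> \<open>the supremum over the compact \<open>K\<close> is attained, so it suffices to beat \<open>1\<close> there\<close>
    then obtain p where pK: "p \<in> K" and pmax: "\<And>q. q \<in> K \<Longrightarrow> tv_dist_P u q \<le> tv_dist_P u p"
      using continuous_attains_sup[OF cK neK] by blast
    obtain a b where ab: "p = (a, b)" by (cases p)
    have ab': "a \<in> cball 0 R" "b \<in> cball 0 R" using pK ab unfolding K_def by auto
    have t0: "0 \<le> u - 1" using u T0 by simp
    have "tv_norm (P (u - 1 + 1) a) (P (u - 1 + 1) b) < 1"
      by (rule tv_norm_P_lt_1_of_coupling[OF t0 _ dl]) (use T0' u ab' in auto)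
    then have Fp: "tv_dist_P u p < 1" unfolding ab tv_dist_P_def by simp
    show "\<exists>\<eta>>0. \<eta> \<le> 1 \<and> (\<forall>x\<in>cball 0 R. \<forall>y\<in>cball 0 R. tv_norm (P u x) (P u y) \<le> 1 - \<eta>)"
    proof (intro exI[of _ "min (1 - tv_dist_P u p) 1"] conjI ballI)
      show "0 < min (1 - tv_dist_P u p) 1" using Fp by simp
      show "min (1 - tv_dist_P u p) 1 \<le> 1" by simp
      fix x y :: 'a assume "x \<in> cball 0 R" "y \<in> cball 0 R"
      then have "tv_dist_P u (x, y) \<le> tv_dist_P u p" by (intro pmax) (auto simp: K_def)
      then show "tv_norm (P u x) (P u y) \<le> 1 - min (1 - tv_dist_P u p) 1" unfolding tv_dist_P_def
        by simp
    qed
  qed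
qed

end

section \<open>Harris' theorem for a contracting kernel\<close>

locale harris_contraction = transition_semigroup +
  fixes V :: "'a::euclidean_space \<Rightarrow> real" and T \<gamma> w c :: real
  assumes V_measurable: "V \<in> borel_measurable borel" and V_nonneg: "\<And>x. 0 \<le> V x"
    and T_pos: "0 < T" and gamma_pos: "0 < \<gamma>" and gamma_lt_1: "\<gamma> < 1"
    and w_nonneg: "0 \<le> w" and c_nonneg: "0 \<le> c"
    and drift_bound: "\<And>n x. (\<integral>\<^sup>+ y. ennreal (V y) \<partial>P (real n * T) x) \<le> ennreal (V x + c)"
    and contraction: "\<And>\<phi> M x y. \<phi> \<in> borel_measurable borel \<Longrightarrow> (\<And>z. \<bar>\<phi> z\<bar> \<le> 1) \<Longrightarrow> 0 \<le> M \<Longrightarrow>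
       (\<And>z z'. \<bar>\<phi> z - \<phi> z'\<bar> \<le> M * (2 + w * V z + w * V z')) \<Longrightarrow>
       \<bar>(\<integral>z. \<phi> z \<partial>P T x) - (\<integral>z. \<phi> z \<partial>P T y)\<bar> \<le> \<gamma> * M * (2 + w * V x + w * V y)"
begin

abbreviation "Q n \<equiv> P (real n * T)"

lemma T_nonneg: "0 \<le> T" using T_pos by simp

lemma Q_time_nonneg: "0 \<le> real n * T" using T_pos by simp

lemma prob_space_Q: "prob_space (Q n x)" using prob_space_P[OF Q_time_nonneg] .

lemma sets_Q: "sets (Q n x) = sets borel" using sets_P[OF Q_time_nonneg] .

lemma Q_Suc: "Q (Suc n) x = P T x \<bind> Q n"
proof -
  have "real (Suc n) * T = T + real n * T" by (simp add: algebra_simps)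
  then show ?thesis using P_add[of T "real n * T" x] T_pos Q_time_nonneg[of n] by simp
qed

lemma Q_Suc': "Q (Suc n) x = Q n x \<bind> P T"
proof -
  have "real (Suc n) * T = real n * T + T" by (simp add: algebra_simps)
  then show ?thesis using P_add[of "real n * T" T x] T_pos Q_time_nonneg[of n] by simp
qed

lemma Q_add: "Q (m + n) x = Q m x \<bind> Q n"
proof -
  have "real (m + n) * T = real m * T + real n * T" by (simp add: algebra_simps)
  then show ?thesis
    using P_add[of "real m * T" "real n * T" x] Q_time_nonneg[of n] Q_time_nonneg[of m] by simp
qed

definition Q_int :: "('a \<Rightarrow> real) \<Rightarrow> nat \<Rightarrow> 'a \<Rightarrow> real" where
  "Q_int f n x = (\<integral>z. f z \<partial>Q n x)"

lemma Q_int_measurable: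
  assumes "f \<in> borel_measurable borel"
  shows "Q_int f n \<in> borel_measurable borel"
  unfolding Q_int_def by (rule integral_P_measurable[OF Q_time_nonneg assms])

lemma abs_Q_int_le_1:
  assumes "f \<in> borel_measurable borel" "\<And>z. \<bar>f z\<bar> \<le> 1"
  shows "\<bar>Q_int f n x\<bar> \<le> 1"
  unfolding Q_int_def
  by (rule abs_integral_le_prob[OF prob_space_Q measurable_P[OF assms(1) Q_time_nonneg] assms(2)])

lemma Q_int_Suc:
  assumes f: "f \<in> borel_measurable borel" "\<And>z. \<bar>f z\<bar> \<le> 1"
  shows "Q_int f (Suc n) x = (\<integral>y. Q_int f n y \<partial>P T x)"
  unfolding Q_int_def Q_Suc
  by (rule integral_bind_P[OF prob_space_P[OF T_nonneg] sets_P[OF T_nonneg] Q_time_nonneg f])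

lemma Q_int_0:
  assumes f: "f \<in> borel_measurable borel"
  shows "Q_int f 0 x = f x"
  unfolding Q_int_def using f integral_return[of x borel f] by (simp add: P_0)

lemma abs_Q_int_diff_le:
  assumes f: "f \<in> borel_measurable borel" "\<And>z. \<bar>f z\<bar> \<le> 1"
  shows "\<bar>Q_int f n x - Q_int f n y\<bar> \<le> \<gamma> ^ n * (2 + w * V x + w * V y)"
proof (induction n arbitrary: x y)
  case 0
  have "\<bar>f x - f y\<bar> \<le> 2" using f(2)[of x] f(2)[of y] by linarith
  also have "\<dots> \<le> 2 + w * V x + w * V y" using w_nonneg V_nonneg[of x] V_nonneg[of y] by simp
  finally show ?case by (simp add: Q_int_0[OF f(1)])
next
  case (Suc n)
  have "\<bar>(\<integral>z. Q_int f n z \<partial>P T x) - (\<integral>z. Q_int f n z \<partial>P T y)\<bar>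
      \<le> \<gamma> * \<gamma> ^ n * (2 + w * V x + w * V y)"
    by (rule contraction[OF Q_int_measurable[OF f(1)] abs_Q_int_le_1[OF f]])
      (use gamma_pos Suc.IH in auto)
  then show ?case by (simp add: Q_int_Suc[OF f])
qed

lemma integrable_V_Q: "integrable (Q m x) V" and integral_V_Q_le: "(\<integral>y. V y \<partial>Q m x) \<le> V x + c"
  using integrable_nonneg_of_nn_integral_le[OF sets_Q V_measurable V_nonneg drift_bound]
    V_nonneg[of x] c_nonneg
  by auto

lemma abs_Q_int_shift_le:
  assumes f: "f \<in> borel_measurable borel" "\<And>z. \<bar>f z\<bar> \<le> 1"
  shows "\<bar>(\<integral>z. f z \<partial>Q (m + n) x) - Q_int f n x\<bar> \<le> \<gamma> ^ n * (2 + 2 * w * V x + w * c)"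
proof -
  interpret Qm: prob_space "Q m x" by (rule prob_space_Q)
  have gm: "Q_int f n \<in> borel_measurable (Q m x)"
    by (rule measurable_P[OF Q_int_measurable[OF f(1)] Q_time_nonneg])
  have gi: "integrable (Q m x) (Q_int f n)"
    by (rule Qm.integrable_const_bound[where B=1]) (use abs_Q_int_le_1[OF f] gm in auto)
  have e1: "(\<integral>z. f z \<partial>Q (m + n) x) = (\<integral>y. Q_int f n y \<partial>Q m x)"
    unfolding Q_add Q_int_def by (rule integral_bind_P[OF prob_space_Q sets_Q Q_time_nonneg f])
  have e2: "(\<integral>y. Q_int f n y \<partial>Q m x) - Q_int f n x = (\<integral>y. Q_int f n y - Q_int f n x \<partial>Q m x)"
    using gi by (simp add: Qm.prob_space)
  have Vi: "integrable (Q m x) V" by (rule integrable_V_Q)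
  have bi: "integrable (Q m x) (\<lambda>y. \<gamma> ^ n * (2 + w * V x + w * V y))"
    using Vi by (intro integrable_mult_right integrable_add integrable_const) auto
  have pw: "\<bar>Q_int f n y - Q_int f n x\<bar> \<le> \<gamma> ^ n * (2 + w * V x + w * V y)" for y
    using abs_Q_int_diff_le[OF f, of n y x] by (simp add: algebra_simps)
  have "\<bar>\<integral>y. Q_int f n y - Q_int f n x \<partial>Q m x\<bar> \<le> (\<integral>y. \<gamma> ^ n * (2 + w * V x + w * V y) \<partial>Q m x)"
    by (rule integral_abs_bound_integral) (use gi bi pw in auto)
  also have "\<dots> = (\<integral>y. \<gamma> ^ n * (2 + w * V x) + (\<gamma> ^ n * w) * V y \<partial>Q m x)"
    by (simp add: algebra_simps)
  also have "\<dots> = (\<integral>y. \<gamma> ^ n * (2 + w * V x) \<partial>Q m x) + (\<integral>y. (\<gamma> ^ n * w) * V y \<partial>Q m x)"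
    using Vi by (intro Bochner_Integration.integral_add) auto
  also have "\<dots> = \<gamma> ^ n * (2 + w * V x) + \<gamma> ^ n * w * (\<integral>y. V y \<partial>Q m x)"
    by (simp add: Qm.prob_space)
  also have "\<dots> \<le> \<gamma> ^ n * (2 + w * V x) + \<gamma> ^ n * w * (V x + c)"
    using integral_V_Q_le[of m x] gamma_pos w_nonneg by (intro add_left_mono mult_left_mono) auto
  also have "\<dots> = \<gamma> ^ n * (2 + 2 * w * V x + w * c)" by (simp add: algebra_simps)
  finally show ?thesis using e1 e2 by simp
qed

definition ref_rate where "ref_rate n = \<gamma> ^ n * (2 + 2 * w * V 0 + w * c)"

lemma power_gamma_tendsto_0: "(\<lambda>n. \<gamma> ^ n * K) \<longlonglongrightarrow> 0"
proof -
  have "(\<lambda>n. \<gamma> ^ n * K) \<longlonglongrightarrow> 0 * K"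
    by (intro tendsto_mult LIMSEQ_power_zero tendsto_const) (use gamma_pos gamma_lt_1 in simp)
  then show ?thesis by simp
qed

lemma ref_rate_tendsto_0: "ref_rate \<longlonglongrightarrow> 0"
  unfolding ref_rate_def by (rule power_gamma_tendsto_0)

lemma integral_indicator_P: "0 \<le> t \<Longrightarrow> (\<integral>z. indicator A z \<partial>P t x) = measure (P t x) A"
  by (simp add: space_P)

lemma Q_int_indicator: "A \<in> sets borel \<Longrightarrow> Q_int (indicator A) n x = measure (Q n x) A"
  unfolding Q_int_def by (simp add: space_P[OF Q_time_nonneg])

text \<open>By \<open>abs_Q_int_shift_le\<close>, the laws of the skeleton chain started at \<open>0\<close> form a Cauchy
  sequence, uniformly over Borel sets; the invariant measure is their setwise limit.\<close>

definition limit_measure :: "'a set \<Rightarrow> real" where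
  "limit_measure A = lim (\<lambda>m. measure (Q m 0) A)"

lemma limit_measure_rate: "A \<in> sets borel \<Longrightarrow> \<bar>limit_measure A - measure (Q n 0) A\<bar> \<le> ref_rate n"
proof -
  assume A: "A \<in> sets borel"
  have ind: "\<bar>indicator A z :: real\<bar> \<le> 1" for z by (simp add: indicator_def)
  have "\<bar>measure (Q (m + n) 0) A - measure (Q n 0) A\<bar> \<le> ref_rate n" for m n
    using abs_Q_int_shift_le[OF borel_measurable_indicator[OF A] ind, of m n 0] A
    by (simp only: Q_int_indicator integral_indicator_P[OF Q_time_nonneg] ref_rate_def)
  from Cauchy_rate_limit[OF this ref_rate_tendsto_0] obtain L where
    L: "(\<lambda>m. measure (Q m 0) A) \<longlonglongrightarrow> L" "\<forall>n. \<bar>L - measure (Q n 0) A\<bar> \<le> ref_rate n" by blast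
  have "limit_measure A = L" unfolding limit_measure_def using L(1) by (rule limI)
  then show ?thesis using L(2) by simp
qed

lemma limit_measure_extends:
  "\<exists>\<mu>. prob_space \<mu> \<and> sets \<mu> = sets borel \<and> (\<forall>A\<in>sets borel. measure \<mu> A = limit_measure A)"
  by (rule prob_measure_of_uniform_limit[where \<nu>="\<lambda>n. Q n 0" and B=ref_rate])
    (use prob_space_Q sets_Q limit_measure_rate ref_rate_tendsto_0 in auto)

definition mu :: "'a measure" where
  "mu = (SOME \<mu>. prob_space \<mu> \<and> sets \<mu> = sets borel \<and> (\<forall>A\<in>sets borel. measure \<mu> A = limit_measure A))"

lemma mu:
  "prob_space mu" "sets mu = sets borel" "\<And>A. A \<in> sets borel \<Longrightarrow> measure mu A = limit_measure A"
  using someI_ex[OF limit_measure_extends] unfolding mu_def[symmetric] by auto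

lemma tv_norm_mu_Q: "tv_norm mu (Q n 0) \<le> ref_rate n"
  by (rule tv_norm_le) (simp add: mu(3) limit_measure_rate)

lemma abs_integral_mu_Q_le:
  fixes f :: "'a \<Rightarrow> real"
  assumes f: "f \<in> borel_measurable borel" "\<And>z. 0 \<le> f z" "\<And>z. f z \<le> 1"
  shows "\<bar>(\<integral>z. f z \<partial>mu) - (\<integral>z. f z \<partial>Q n 0)\<bar> \<le> ref_rate n"
  using abs_integral_diff_le_tv_norm[OF mu(1,2) prob_space_Q sets_Q f] tv_norm_mu_Q
  by (rule order_trans)

lemma integral_Q_tendsto_mu:
  fixes f :: "'a \<Rightarrow> real"
  assumes f: "f \<in> borel_measurable borel" "\<And>z. 0 \<le> f z" "\<And>z. f z \<le> 1"
  shows "(\<lambda>n. \<integral>z. f z \<partial>Q n 0) \<longlonglongrightarrow> (\<integral>z. f z \<partial>mu)"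
proof -
  have "(\<lambda>n. (\<integral>z. f z \<partial>Q n 0) - (\<integral>z. f z \<partial>mu)) \<longlonglongrightarrow> 0"
    by (rule Lim_null_comparison[OF _ ref_rate_tendsto_0])
      (use abs_integral_mu_Q_le[OF f] in \<open>auto simp: abs_minus_commute\<close>)
  then show ?thesis by (rule LIM_zero_cancel)
qed

definition rate where "rate n x = \<gamma> ^ n * (4 + w * V x + 3 * w * V 0 + w * c)"

lemma abs_Q_int_mu_le:
  fixes f :: "'a \<Rightarrow> real"
  assumes f: "f \<in> borel_measurable borel" "\<And>z. 0 \<le> f z" "\<And>z. f z \<le> 1"
  shows "\<bar>Q_int f n x - (\<integral>z. f z \<partial>mu)\<bar> \<le> rate n x"
proof -
  have fb: "\<bar>f z\<bar> \<le> 1" for z using f(2,3)[of z] by simp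
  have h1: "\<bar>(\<integral>z. f z \<partial>mu) - Q_int f n 0\<bar> \<le> ref_rate n"
  proof -
    have "(\<lambda>m. \<integral>z. f z \<partial>Q (m + n) 0) \<longlonglongrightarrow> (\<integral>z. f z \<partial>mu)"
      using LIMSEQ_ignore_initial_segment[OF integral_Q_tendsto_mu[OF f], of n] by simp
    then have "(\<lambda>m. \<bar>(\<integral>z. f z \<partial>Q (m + n) 0) - Q_int f n 0\<bar>) \<longlonglongrightarrow> \<bar>(\<integral>z. f z \<partial>mu) - Q_int f n 0\<bar>"
      by (intro tendsto_intros)
    then show ?thesis
      by (rule tendsto_upperbound) (use abs_Q_int_shift_le[OF f(1) fb] in \<open>auto simp: ref_rate_def\<close>)
  qed
  have h2: "\<bar>Q_int f n x - Q_int f n 0\<bar> \<le> \<gamma> ^ n * (2 + w * V x + w * V 0)"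
    by (rule abs_Q_int_diff_le[OF f(1) fb])
  have "\<bar>Q_int f n x - (\<integral>z. f z \<partial>mu)\<bar> \<le> \<bar>Q_int f n x - Q_int f n 0\<bar> + \<bar>(\<integral>z. f z \<partial>mu) - Q_int f n 0\<bar>"
    by linarith
  also have "\<dots> \<le> \<gamma> ^ n * (2 + w * V x + w * V 0) + ref_rate n" using h1 h2 by linarith
  also have "\<dots> = rate n x" unfolding rate_def ref_rate_def by (simp add: algebra_simps)
  finally show ?thesis .
qed

lemma rate_tendsto_0: "(\<lambda>n. rate n x) \<longlonglongrightarrow> 0"
  unfolding rate_def by (rule power_gamma_tendsto_0)

lemma integral_indicator_mu: "A \<in> sets borel \<Longrightarrow> (\<integral>z. indicator A z \<partial>mu) = measure mu A"
  using mu(2) by (simp add: sets_eq_imp_space_eq[OF mu(2)])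

lemma mu_bind_P_T: "mu \<bind> P T = mu"
proof (rule prob_space_eq_borelI[OF prob_space_bind_P[OF mu(1,2) T_nonneg]
      sets_bind_P[OF mu(1,2) T_nonneg] mu(1,2)])
  fix A :: "'a set" assume A: "A \<in> sets borel"
  define f where "f y = measure (P T y) A" for y
  have f: "f \<in> borel_measurable borel" "\<And>z. 0 \<le> f z" "\<And>z. f z \<le> 1"
    unfolding f_def using measure_P_measurable[OF T_nonneg A] measure_P_le_1[OF T_nonneg] by auto
  have "measure (mu \<bind> P T) A = (\<integral>y. f y \<partial>mu)"
    unfolding f_def by (rule measure_bind_P[OF mu(1,2) T_nonneg A])
  moreover have "(\<lambda>n. \<integral>y. f y \<partial>Q n 0) \<longlonglongrightarrow> (\<integral>y. f y \<partial>mu)" by (rule integral_Q_tendsto_mu[OF f])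
  moreover have "(\<integral>y. f y \<partial>Q n 0) = measure (Q (Suc n) 0) A" for n
    unfolding f_def Q_Suc' by (rule measure_bind_P[OF prob_space_Q sets_Q T_nonneg A, symmetric])
  moreover have "(\<lambda>n. measure (Q (Suc n) 0) A) \<longlonglongrightarrow> measure mu A"
  proof -
    have "(\<lambda>n. \<integral>z. (indicator A :: 'a \<Rightarrow> real) z \<partial>Q n 0) \<longlonglongrightarrow> (\<integral>z. indicator A z \<partial>mu)"
      by (rule integral_Q_tendsto_mu) (use A in auto)
    then have "(\<lambda>n. measure (Q n 0) A) \<longlonglongrightarrow> measure mu A"
      using A by (simp add: space_P[OF Q_time_nonneg] sets_eq_imp_space_eq[OF mu(2)])
    then show ?thesis by (rule LIMSEQ_Suc)
  qed
  ultimately show "measure (mu \<bind> P T) A = measure mu A"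
    using LIMSEQ_unique by auto
qed

lemma mu_bind_Q: "mu \<bind> Q n = mu"
proof (induction n)
  case 0
  then show ?case using bind_P_0[OF mu(2)] by simp
next
  case (Suc n)
  have "real (Suc n) * T = real n * T + T" by (simp add: algebra_simps)
  then have "mu \<bind> Q (Suc n) = (mu \<bind> Q n) \<bind> P T"
    using bind_P_assoc[OF mu(2) Q_time_nonneg T_nonneg, of n] by simp
  then show ?case using Suc mu_bind_P_T by simp
qed

lemma eq_mu_of_Q_invariant:
  assumes nu: "prob_space \<nu>" "sets \<nu> = sets borel" and inv: "\<And>n. \<nu> \<bind> Q n = \<nu>"
  shows "\<nu> = mu"
proof (rule prob_space_eq_borelI[OF nu mu(1,2)])
  fix A :: "'a set" assume A: "A \<in> sets borel"
  interpret N: prob_space \<nu> by (rule nu(1))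
  define s where "s n y = measure (Q n y) A" for n y
  have sm: "s n \<in> borel_measurable \<nu>" for n
    unfolding s_def using measure_P_measurable[OF Q_time_nonneg A]
    by (subst measurable_cong_sets[where M'=borel and N'=borel]) (simp_all add: nu(2))
  have eq: "measure \<nu> A = (\<integral>y. s n y \<partial>\<nu>)" for n
    using measure_bind_P[OF nu Q_time_nonneg A, of n] inv[of n] unfolding s_def by simp
  have conv: "(\<lambda>n. s n y) \<longlonglongrightarrow> measure mu A" for y
  proof -
    have "\<bar>s n y - measure mu A\<bar> \<le> rate n y" for n
      using abs_Q_int_mu_le[of "indicator A" n y] A unfolding s_def
      by (simp add: Q_int_indicator integral_indicator_mu sets_eq_imp_space_eq[OF mu(2)])
    then have "(\<lambda>n. s n y - measure mu A) \<longlonglongrightarrow> 0"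
      by (intro Lim_null_comparison[OF _ rate_tendsto_0[of y]]) auto
    then show ?thesis by (rule LIM_zero_cancel)
  qed
  have "(\<lambda>n. \<integral>y. s n y \<partial>\<nu>) \<longlonglongrightarrow> (\<integral>y. measure mu A \<partial>\<nu>)"
  proof (rule integral_dominated_convergence[where w="\<lambda>_. 1"])
    show "\<And>n. AE y in \<nu>. norm (s n y) \<le> 1"
      unfolding s_def using prob_space.prob_le_1[OF prob_space_Q] by auto
  qed (use sm conv in auto)
  then have "(\<lambda>n. measure \<nu> A) \<longlonglongrightarrow> measure mu A"
    using eq by (simp add: N.prob_space)
  then show "measure \<nu> A = measure mu A" using LIMSEQ_unique tendsto_const by blast
qed

lemma mu_bind_P: "0 \<le> t \<Longrightarrow> mu \<bind> P t = mu"
proof -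
  assume t: "0 \<le> t"
  show ?thesis
  proof (rule eq_mu_of_Q_invariant[OF prob_space_bind_P[OF mu(1,2) t] sets_bind_P[OF mu(1,2) t]])
    fix n
    have "(mu \<bind> P t) \<bind> Q n = mu \<bind> P (t + real n * T)"
      by (rule bind_P_assoc[OF mu(2) t Q_time_nonneg])
    also have "\<dots> = mu \<bind> P (real n * T + t)" by (simp add: add.commute)
    also have "\<dots> = (mu \<bind> Q n) \<bind> P t" by (rule bind_P_assoc[OF mu(2) Q_time_nonneg t, symmetric])
    also have "\<dots> = mu \<bind> P t" by (simp add: mu_bind_Q)
    finally show "(mu \<bind> P t) \<bind> Q n = mu \<bind> P t" .
  qed
qed

lemma invariant_prob_mu: "invariant_prob P mu"
  unfolding invariant_prob_def using mu mu_bind_P by auto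

lemma invariant_prob_unique: "invariant_prob P \<nu> \<Longrightarrow> \<nu> = mu"
  unfolding invariant_prob_def by (intro eq_mu_of_Q_invariant) (use Q_time_nonneg in auto)

lemma tv_norm_P_mu_le_rate:
  assumes t: "0 \<le> t"
  shows "tv_norm (P t x) mu \<le> rate (nat \<lfloor>t / T\<rfloor>) x"
proof (rule tv_norm_le)
  define n where "n = nat \<lfloor>t / T\<rfloor>"
  define s where "s = t - real n * T"
  have fl: "real n \<le> t / T" unfolding n_def using t T_pos by simp
  have s0: "0 \<le> s" unfolding s_def using fl T_pos by (simp add: field_simps)
  have tdec: "t = real n * T + s" unfolding s_def by simp
  have Pt: "P t x = Q n x \<bind> P s" using P_add[OF Q_time_nonneg s0, of n x] tdec by simp
  fix A :: "'a set" assume A: "A \<in> sets borel"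
  define f where "f y = measure (P s y) A" for y
  have f: "f \<in> borel_measurable borel" "\<And>z. 0 \<le> f z" "\<And>z. f z \<le> 1"
    unfolding f_def using measure_P_measurable[OF s0 A] measure_P_le_1[OF s0] by auto
  have 1: "measure (P t x) A = Q_int f n x"
    unfolding Pt Q_int_def f_def by (rule measure_bind_P[OF prob_space_Q sets_Q s0 A])
  have 2: "measure mu A = (\<integral>y. f y \<partial>mu)"
    using measure_bind_P[OF mu(1,2) s0 A] mu_bind_P[OF s0] unfolding f_def by simp
  show "\<bar>measure (P t x) A - measure mu A\<bar> \<le> rate (nat \<lfloor>t / T\<rfloor>) x"
    unfolding 1 2 n_def[symmetric] by (rule abs_Q_int_mu_le[OF f])
qed

lemma tv_norm_P_mu_exponential:
  "\<exists>\<theta>>0. \<exists>C>0. \<forall>x. \<forall>t\<ge>0. tv_norm (P t x) mu \<le> C * exp (- \<theta> * t) * (1 + V x)"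
proof -
  define C where "C = 4 + w + 3 * w * V 0 + w * c"
  define \<theta> where "\<theta> = - ln \<gamma> / T"
  have \<theta>: "0 < \<theta>" unfolding \<theta>_def using gamma_pos gamma_lt_1 T_pos by (simp add: divide_neg_pos)
  have wV: "0 \<le> w * V z" for z using w_nonneg V_nonneg[of z] by simp
  have wc: "0 \<le> w * c" using w_nonneg c_nonneg by simp
  have C: "0 < C" unfolding C_def using wV[of 0] w_nonneg wc by simp
  have "tv_norm (P t x) mu \<le> (C / \<gamma>) * exp (- \<theta> * t) * (1 + V x)" if t: "0 \<le> t" for t x
  proof -
    define n where "n = nat \<lfloor>t / T\<rfloor>"
    have "w * V x \<le> C * V x"
      unfolding C_def using wV[of 0] wc V_nonneg[of x] by (intro mult_right_mono) auto
    then have "4 + w * V x + 3 * w * V 0 + w * c \<le> C * (1 + V x)"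
      using w_nonneg unfolding C_def by (simp add: algebra_simps)
    then have "rate n x \<le> \<gamma> ^ n * (C * (1 + V x))"
      unfolding rate_def using gamma_pos by (intro mult_left_mono) auto
    also have "\<dots> \<le> (exp (- \<theta> * t) / \<gamma>) * (C * (1 + V x))"
      using power_floor_le_exp[OF gamma_pos gamma_lt_1 T_pos t] C V_nonneg[of x]
      unfolding n_def \<theta>_def by (intro mult_right_mono) auto
    also have "\<dots> = (C / \<gamma>) * exp (- \<theta> * t) * (1 + V x)" by simp
    finally show ?thesis using tv_norm_P_mu_le_rate[OF t, of x] unfolding n_def by linarith
  qed
  then show ?thesis using \<theta> C gamma_pos by (intro exI[of _ \<theta>] conjI exI[of _ "C / \<gamma>"]) auto
qed

lemma exponential_ergodicity:
  "\<exists>\<mu>. invariant_prob P \<mu> \<and> (\<forall>\<nu>. invariant_prob P \<nu> \<longrightarrow> \<nu> = \<mu>) \<and>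
     (\<exists>\<theta>>0. \<exists>C>0. \<forall>x. \<forall>t\<ge>0. tv_norm (P t x) \<mu> \<le> C * exp (- \<theta> * t) * (1 + V x))"
  using invariant_prob_mu invariant_prob_unique tv_norm_P_mu_exponential by blast

end

section \<open>The contraction under (LC), (H1) and (H2)\<close>

context transition_semigroup
begin

lemma harris_contraction_of_small_set:
  fixes V :: "'a \<Rightarrow> real"
  assumes Vm: "V \<in> borel_measurable borel" and V0: "\<And>x. 0 \<le> V x" and T: "0 < T"
    and a: "0 \<le> \<alpha>" "\<alpha> < 1" and b: "0 < b" and R: "2 * b / (1 - \<alpha>) < R"
    and e: "0 < \<eta>" "\<eta> \<le> 1"
    and HK: "\<And>x. (\<integral>\<^sup>+ y. ennreal (V y) \<partial>P T x) \<le> ennreal (\<alpha> * V x + b)"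
    and HV: "\<And>n x. (\<integral>\<^sup>+ y. ennreal (V y) \<partial>P (real n * T) x) \<le> ennreal (V x + b)"
    and small: "\<And>x y. V x + V y \<le> R \<Longrightarrow> tv_norm (P T x) (P T y) \<le> 1 - \<eta>"
  shows "\<exists>\<gamma> w. harris_contraction P V T \<gamma> w b"
proof -
  define w where "w = \<eta> / (2 * b)"
  obtain \<gamma> where \<gamma>: "0 < \<gamma>" "\<gamma> < 1" and bound: "\<And>M s \<tau>. 0 \<le> M \<Longrightarrow> 0 \<le> s \<Longrightarrow> \<tau> \<le> 1 \<Longrightarrow>
      (s \<le> R \<longrightarrow> \<tau> \<le> 1 - \<eta>) \<Longrightarrow> M * (2 * \<tau> + w * \<alpha> * s + 2 * w * b) \<le> \<gamma> * M * (2 + w * s)"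
    using weighted_contraction_constant[OF a b R e] unfolding w_def by blast
  have w0: "0 \<le> w" unfolding w_def using e b by simp
  have "harris_contraction P V T \<gamma> w b"
  proof (intro harris_contraction.intro harris_contraction_axioms.intro)
    fix \<phi> M x y
    assume \<phi>m: "\<phi> \<in> borel_measurable borel" and \<phi>b: "\<And>z. \<bar>\<phi> z\<bar> \<le> 1" and M: "0 \<le> M"
      and lip: "\<And>z z'. \<bar>\<phi> z - \<phi> z'\<bar> \<le> M * (2 + w * V z + w * V z')"
    have "\<bar>(\<integral>z. \<phi> z \<partial>P T x) - (\<integral>z. \<phi> z \<partial>P T y)\<bar>
        \<le> M * (2 * tv_norm (P T x) (P T y) + w * \<alpha> * (V x + V y) + 2 * w * b)"
      using T b by (intro abs_integral_diff_le_weighted[OF Vm V0 _ HK a(1) _ w0 \<phi>m \<phi>b M lip]) auto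
    also have "\<dots> \<le> \<gamma> * M * (2 + w * (V x + V y))"
      using T M V0[of x] V0[of y] small[of x y] tv_norm_P_le_1[of T x y] by (intro bound) auto
    finally show "\<bar>(\<integral>z. \<phi> z \<partial>P T x) - (\<integral>z. \<phi> z \<partial>P T y)\<bar> \<le> \<gamma> * M * (2 + w * V x + w * V y)"
      by (simp add: algebra_simps)
  qed (use transition_semigroup_axioms Vm V0 T \<gamma> w0 b HV in auto)
  then show ?thesis by blast
qed

lemma harris_contraction_of_hypotheses:
  assumes LC: "hyp_LC P V" and H1: "hyp_H1 P" and H2: "hyp_H2 P"
  shows "\<exists>T \<gamma> w c. harris_contraction P V T \<gamma> w c"
proof -
  obtain ts \<alpha> \<beta> where ts: "0 < ts" and a: "0 < \<alpha>" "\<alpha> < 1" and \<beta>: "0 \<le> \<beta>"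
    and HL: "\<And>x. (\<integral>\<^sup>+ y. ennreal (V y) \<partial>P ts x) \<le> ennreal (\<alpha> * V x + \<beta>)"
    using LC unfolding hyp_LC_def by auto
  have Vm: "V \<in> borel_measurable borel" and V0: "\<And>x. 0 \<le> V x"
    and Vlim: "filterlim V at_top at_infinity"
    using LC unfolding hyp_LC_def by (auto intro: order.trans[OF zero_le_one])
  define b where "b = \<beta> / (1 - \<alpha>) + 1"
  have b: "0 < b" unfolding b_def using a \<beta> by (simp add: add_nonneg_pos)
  define R where "R = 2 * b / (1 - \<alpha>) + 1"
  obtain r where r: "0 < r" "\<And>x. V x \<le> R \<Longrightarrow> x \<in> cball 0 r"
    using sublevel_subset_cball[OF Vlim] by blast
  obtain T1 where T1: "\<And>u. T1 \<le> u \<Longrightarrow> \<exists>\<eta>>0. \<eta> \<le> 1 \<and>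
      (\<forall>x\<in>cball 0 r. \<forall>y\<in>cball 0 r. tv_norm (P u x) (P u y) \<le> 1 - \<eta>)"
    using tv_norm_P_uniform_bound_on_ball[OF H1 H2 r(1)] by blast
  \<comment> \<open>a multiple of \<open>ts\<close>, so that the drift iterates, beyond \<open>T1\<close>, so that balls are small\<close>
  define k where "k = nat \<lceil>T1 / ts\<rceil> + 1"
  define T where "T = real k * ts"
  have k: "1 \<le> k" unfolding k_def by simp
  have "T1 / ts \<le> real k" unfolding k_def by linarith
  then obtain \<eta> where \<eta>: "0 < \<eta>" "\<eta> \<le> 1"
    and ball: "\<And>x y. x \<in> cball 0 r \<Longrightarrow> y \<in> cball 0 r \<Longrightarrow> tv_norm (P T x) (P T y) \<le> 1 - \<eta>"
    using T1[of T] ts unfolding T_def by (auto simp: pos_divide_le_eq)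
  have small: "tv_norm (P T x) (P T y) \<le> 1 - \<eta>" if "V x + V y \<le> R" for x y
    using that V0[of x] V0[of y] by (intro ball r(2)) auto
  have "\<beta> / (1 - \<alpha>) \<le> b" unfolding b_def by simp
  note lyap = lyapunov_iterate_le[OF Vm V0 less_imp_le[OF ts] less_imp_le[OF a(1)] a(2) \<beta> HL this]
  have HK: "(\<integral>\<^sup>+ y. ennreal (V y) \<partial>P T x) \<le> ennreal (\<alpha> * V x + b)" for x
    unfolding T_def using lyap(1)[OF k] .
  have HV: "(\<integral>\<^sup>+ y. ennreal (V y) \<partial>P (real n * T) x) \<le> ennreal (V x + b)" for n x
    using lyap(2)[of "n * k" x] unfolding T_def by (simp add: mult.assoc)
  have "0 < T" unfolding T_def using k ts by simp
  moreover have "2 * b / (1 - \<alpha>) < R" unfolding R_def by simp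
  ultimately show ?thesis
    using harris_contraction_of_small_set[OF Vm V0 _ less_imp_le[OF a(1)] a(2) b _ \<eta> HK HV small]
    by blast
qed

end

theorem theorem2p1:
  fixes P :: "real \<Rightarrow> 'a::euclidean_space \<Rightarrow> 'a measure" and V :: "'a \<Rightarrow> real"
  assumes "markov_semigroup P"
    and "hyp_LC P V"
    and "hyp_H1 P"
    and "hyp_H2 P"
  shows "\<exists>\<mu>. invariant_prob P \<mu> \<and> (\<forall>\<nu>. invariant_prob P \<nu> \<longrightarrow> \<nu> = \<mu>) \<and>
           (\<exists>\<theta>>0. \<exists>C>0. \<forall>x. \<forall>t\<ge>0.
              tv_norm (P t x) \<mu> \<le> C * exp (- \<theta> * t) * (1 + V x))"
proof -
  interpret transition_semigroup P by unfold_locales (rule assms(1))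
  obtain T \<gamma> w c where "harris_contraction P V T \<gamma> w c"
    using harris_contraction_of_hypotheses[OF assms(2-4)] by blast
  then interpret harris_contraction P V T \<gamma> w c .
  show ?thesis by (rule exponential_ergodicity)
qed

end
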